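(* Let $\mathfrak{T}$ be a triangulation of the strip. Then $t=\Phi(\mathfrak{T})$ is well defined (independent of the choice of the arcs $(p^\circ,q_\circ),(r^\circ,s_\circ)$ in its definition), it is an $\mathrm{SL}_2$-tiling with enough ones, and for all $i,j\in\mathbb{Z}$ we have $t_{ij}=1$ if and only if $(i^\circ,j_\circ)\in\mathfrak{T}$.
   Context: Vertices of the strip: two disjoint copies of $\mathbb{Z}$, written $\mathbb{Z}^\circ=\{p^\circ: p\in\mathbb{Z}\}$ (upper edge) and $\mathbb{Z}_\circ=\{q_\circ : q\in\mathbb{Z}\}$ (lower edge). Geometrically, $p^\circ$ is the point $(-p,1)$ and $q_\circ$ is the point $(q,-1)$ of the strip $\mathbb{R}\times[-1,1]$. A connecting arc is a pair $(p^\circ,q_\circ)$ with $p,q\in\mathbb{Z}$; an internal arc is a pair $(p^\circ,q^\circ)$ or $(p_\circ,q_\circ)$ with $p\le q-2$. Two distinct arcs cross exactly in the following cases: connecting arcs $(p^\circ,q_\circ),(p'^\circ,q'_\circ)$ cross iff $(p-p')(q-q')>0$; internal arcs $(a^\circ,b^\circ),(c^\circ,d^\circ)$ cross iff $a<c<b<d$ or $c<a<d<b$ (same for lower internal arcs); $(a^\circ,b^\circ)$ crosses $(p^\circ,q_\circ)$ iff $a<p<b$, and $(a_\circ,b_\circ)$ crosses $(p^\circ,q_\circ)$ iff $a<q<b$; upper and lower internal arcs never cross. A triangulation of the strip is a maximal set $\mathfrak{T}$ of pairwise non-crossing arcs such that for every $(i,j)\in\mathbb{Z}^2$ there is $(p^\circ,q_\circ)\in\mathfrak{T}$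 with $p<i,\ q>j$, and there is $(p^\circ,q_\circ)\in\mathfrak{T}$ with $p>i,\ q<j$. An $\mathrm{SL}_2$-tiling is a map $t:\mathbb{Z}\times\mathbb{Z}\to\{1,2,3,\dots\}$, $(i,j)\mapsto t_{ij}$, with $t_{ij}t_{i+1,j+1}-t_{i,j+1}t_{i+1,j}=1$ for all $i,j$. It has enough ones if for every $(i,j)$ there is $(p,q)$ with $p<i,\ q>j$ and $t_{pq}=1$, and there is $(p,q)$ with $p>i,\ q<j$ and $t_{pq}=1$. Friese numbers of a triangulated polygon: for a convex polygon with vertices $v_0,\dots,v_n$ in cyclic order and a triangulation $\mathcal{X}$, let $a_l$ be the number of triangles incident with $v_l$; for fixed $k$ define $m_k(k)=0$, $m_k(k+1)=1$, $m_k(l+1)=a_lm_k(l)-m_k(l-1)$ (indices mod $n+1$, $l$ running from $k$ to $k+n$) and set $\mathcal{X}(v_k,v_l)=m_k(l)$. $\Phi(\mathfrak{T})$: for $(i,j)$ choose $(p^\circ,q_\circ),(r^\circ,s_\circ)\in\mathfrak{T}$ with $p<i<r$, $s<j<q$; let $P$ be the polygon with vertices in cyclic order $p^\circ,\dots,r^\circ,s_\circ,\dots,q_\circ$, and $\mathfrak{T}_P$ the triangulation of $P$ formed by the arcs of $\mathfrak{T}$ that are diagonals of $P$; set $\Phi(\mathfrak{T})_{ij}=\mathfrak{T}_P(i^\circ,j_\circ)$. *)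

theory Defs
  imports Main
begin

text \<open>Top x is the upper vertex x-circ at (-x,1); Bot y is the lower vertex y-sub-circ at (y,-1).\<close>
datatype vtx = Top int | Bot int

text \<open>Conn p q is the connecting arc (p-circ, q-sub-circ); Up a b the upper internal arc
 (a-circ, b-circ); Low a b the lower internal arc (a-sub-circ, b-sub-circ).\<close>
datatype arc = Conn int int | Up int int | Low int int

fun is_arc :: "arc \<Rightarrow> bool" where
  "is_arc (Conn p q) = True"
| "is_arc (Up a b) = (a \<le> b - 2)"
| "is_arc (Low a b) = (a \<le> b - 2)"

fun ends :: "arc \<Rightarrow> vtx set" where
  "ends (Conn p q) = {Top p, Bot q}"
| "ends (Up a b) = {Top a, Top b}"
| "ends (Low a b) = {Bot a, Bot b}"

fun crosses :: "arc \<Rightarrow> arc \<Rightarrow> bool" where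
  "crosses (Conn p q) (Conn p' q') = ((p - p') * (q - q') > 0)"
| "crosses (Up a b) (Up c d) = ((a < c \<and> c < b \<and> b < d) \<or> (c < a \<and> a < d \<and> d < b))"
| "crosses (Low a b) (Low c d) = ((a < c \<and> c < b \<and> b < d) \<or> (c < a \<and> a < d \<and> d < b))"
| "crosses (Up a b) (Conn p q) = (a < p \<and> p < b)"
| "crosses (Conn p q) (Up a b) = (a < p \<and> p < b)"
| "crosses (Low a b) (Conn p q) = (a < q \<and> q < b)"
| "crosses (Conn p q) (Low a b) = (a < q \<and> q < b)"
| "crosses (Up a b) (Low c d) = False"
| "crosses (Low a b) (Up c d) = False"

definition strip_triangulation :: "arc set \<Rightarrow> bool" where
  "strip_triangulation T \<longleftrightarrow>
     (\<forall>x\<in>T. is_arc x) \<and>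
     (\<forall>x\<in>T. \<forall>y\<in>T. \<not> crosses x y) \<and>
     (\<forall>x. is_arc x \<and> x \<notin> T \<longrightarrow> (\<exists>y\<in>T. crosses x y)) \<and>
     (\<forall>i j. (\<exists>p q. Conn p q \<in> T \<and> p < i \<and> q > j) \<and>
            (\<exists>p q. Conn p q \<in> T \<and> p > i \<and> q < j))"

definition sl2_tiling :: "(int \<Rightarrow> int \<Rightarrow> int) \<Rightarrow> bool" where
  "sl2_tiling t \<longleftrightarrow> (\<forall>i j. t i j \<ge> 1) \<and>
     (\<forall>i j. t i j * t (i+1) (j+1) - t i (j+1) * t (i+1) j = 1)"

definition enough_ones :: "(int \<Rightarrow> int \<Rightarrow> int) \<Rightarrow> bool" where
  "enough_ones t \<longleftrightarrow> (\<forall>i j. (\<exists>p q. p < i \<and> q > j \<and> t p q = 1) \<and>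
                              (\<exists>p q. p > i \<and> q < j \<and> t p q = 1))"

text \<open>A polygon with N vertices v_0,...,v_{N-1} (indices 0..<N) in cyclic order; D u v means
 that the segment between v_u and v_v belongs to the triangulation.\<close>
definition poly_adj :: "nat \<Rightarrow> (nat \<Rightarrow> nat \<Rightarrow> bool) \<Rightarrow> nat \<Rightarrow> nat \<Rightarrow> bool" where
  "poly_adj N D u v \<longleftrightarrow> u < N \<and> v < N \<and> u \<noteq> v \<and>
     (v = Suc u mod N \<or> u = Suc v mod N \<or> D u v \<or> D v u)"

definition poly_triangles_at :: "nat \<Rightarrow> (nat \<Rightarrow> nat \<Rightarrow> bool) \<Rightarrow> nat \<Rightarrow> nat" where
  "poly_triangles_at N D l = card {S. S \<subseteq> {..<N} \<and> card S = 3 \<and> l \<in> S \<and>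
      (\<forall>u\<in>S. \<forall>v\<in>S. u \<noteq> v \<longrightarrow> poly_adj N D u v)}"

text \<open>friese_seq a N k d = m_k(k+d) (indices mod N).\<close>
fun friese_seq :: "(nat \<Rightarrow> int) \<Rightarrow> nat \<Rightarrow> nat \<Rightarrow> nat \<Rightarrow> int" where
  "friese_seq a N k 0 = 0"
| "friese_seq a N k (Suc 0) = 1"
| "friese_seq a N k (Suc (Suc d)) =
     a ((k + d + 1) mod N) * friese_seq a N k (Suc d) - friese_seq a N k d"

text \<open>X(v_k, v_l) = m_k(l), for k, l < N.\<close>
definition friese :: "nat \<Rightarrow> (nat \<Rightarrow> nat \<Rightarrow> bool) \<Rightarrow> nat \<Rightarrow> nat \<Rightarrow> int" where
  "friese N D k l = friese_seq (\<lambda>x. int (poly_triangles_at N D x)) N k ((l + N - k) mod N)"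

text \<open>Vertices of P in cyclic order: p-circ, ..., r-circ, s-sub-circ, ..., q-sub-circ.\<close>
definition poly_verts :: "int \<Rightarrow> int \<Rightarrow> int \<Rightarrow> int \<Rightarrow> vtx list" where
  "poly_verts p q r s = map Top [p..r] @ map Bot [s..q]"

definition valid_choice :: "arc set \<Rightarrow> int \<Rightarrow> int \<Rightarrow> int \<Rightarrow> int \<Rightarrow> int \<Rightarrow> int \<Rightarrow> bool" where
  "valid_choice T i j p q r s \<longleftrightarrow>
     Conn p q \<in> T \<and> Conn r s \<in> T \<and> p < i \<and> i < r \<and> s < j \<and> j < q"

text \<open>T_P(i-circ, j-sub-circ), where T_P consists of the arcs of T that are diagonals of P.
 Index of i-circ in the vertex list is i - p, index of j-sub-circ is (r - p + 1) + (j - s).\<close>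
definition phi_at :: "arc set \<Rightarrow> int \<Rightarrow> int \<Rightarrow> int \<Rightarrow> int \<Rightarrow> int \<Rightarrow> int \<Rightarrow> int" where
  "phi_at T i j p q r s =
     (let vs = poly_verts p q r s;
          N = length vs;
          D = (\<lambda>u v. \<exists>x\<in>T. ends x = {vs ! u, vs ! v})
      in friese N D (nat (i - p)) (nat (r - p + 1) + nat (j - s)))"

definition Phi :: "arc set \<Rightarrow> int \<Rightarrow> int \<Rightarrow> int" where
  "Phi T i j = (let (p, q, r, s) = (SOME (p, q, r, s). valid_choice T i j p q r s)
                in phi_at T i j p q r s)"

end

theory Submission
  imports Defs
begin

text \<open>With M(a) the 2x2 matrix of the Friese recursion and a_v the quiddity of a vertex (the
  number of triangles at v), the Friese numbers of a triangulated polygon are (1,1) entries of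
  products of the M(a_v). Gluing two triangulated polygons along a diagonal adds the quiddities
  at its ends, and the inner polygon's product M(a_1)...M(a_n) = -1 (Conway-Coxeter) makes it
  drop out of every product running past it. By induction over gluings, this relation holds and
  every Friese number is at least 1, with equality exactly for edges and diagonals. The polygon P
  cut out of the strip by two connecting arcs of T is triangulated by the arcs of T inside it;
  enlarging P glues a triangulated polygon onto one of its sides, which does not change the
  Friese numbers between vertices of P, hence Phi is well defined. The SL2 relation is the
  determinant identity for products of the M(a), and t_ij = 1 exactly for the arcs of T.\<close>

section \<open>Matrices of the Friese recursion\<close>

datatype mat2 = Mat2 int int int int

instantiation mat2 :: "{monoid_mult, uminus}"
begin

fun times_mat2 :: "mat2 \<Rightarrow> mat2 \<Rightarrow> mat2" where
  "Mat2 a b c d * Mat2 e f g h = Mat2 (a*e + b*g) (a*f + b*h) (c*e + d*g) (c*f + d*h)"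

definition one_mat2 :: mat2 where
  "1 = Mat2 1 0 0 1"

fun uminus_mat2 :: "mat2 \<Rightarrow> mat2" where
  "- Mat2 a b c d = Mat2 (- a) (- b) (- c) (- d)"

instance
proof
  fix A B C :: mat2
  show "A * B * C = A * (B * C)"
    by (cases A; cases B; cases C) (simp add: algebra_simps)
  show "1 * A = A" "A * 1 = A"
    by (cases A; simp add: one_mat2_def)+
qed

end

lemma mat2_minus_mult [simp]:
  fixes A B :: mat2
  shows "- A * B = - (A * B)" and "A * - B = - (A * B)"
  by (cases A; cases B; simp)+

fun mat2_11 :: "mat2 \<Rightarrow> int" where "mat2_11 (Mat2 a b c d) = a"
fun mat2_21 :: "mat2 \<Rightarrow> int" where "mat2_21 (Mat2 a b c d) = c"
fun det2 :: "mat2 \<Rightarrow> int" where "det2 (Mat2 a b c d) = a*d - b*c"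
fun adjugate2 :: "mat2 \<Rightarrow> mat2" where "adjugate2 (Mat2 a b c d) = Mat2 d (- b) (- c) a"

lemma det2_mult: "det2 (A * B) = det2 A * det2 B"
  by (cases A; cases B) (simp add: algebra_simps)

lemma mult_adjugate2: "det2 A = 1 \<Longrightarrow> A * adjugate2 A = 1"
  by (cases A) (simp add: one_mat2_def algebra_simps)

lemma mult_eq_minus_one_commute:
  assumes "X * Y = - 1" and "det2 Y = 1"
  shows "Y * X = - 1"
proof -
  have "X = X * Y * adjugate2 Y"
    using mult_adjugate2[OF assms(2)] by (simp add: mult.assoc)
  then have "X = - adjugate2 Y"
    using assms(1) by simp
  then show ?thesis
    using mult_adjugate2[OF assms(2)] by simp
qed

text \<open>The matrix of one step m(l+1) = a_l m(l) - m(l-1) of the Friese recursion.\<close>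
definition frieze_step :: "int \<Rightarrow> mat2" where
  "frieze_step x = Mat2 x (-1) 1 0"

fun frieze_prod :: "int list \<Rightarrow> mat2" where
  "frieze_prod [] = 1"
| "frieze_prod (x # xs) = frieze_prod xs * frieze_step x"

lemma frieze_prod_append: "frieze_prod (xs @ ys) = frieze_prod ys * frieze_prod xs"
  by (induct xs) (auto simp: mult.assoc)

lemma frieze_prod_snoc: "frieze_prod (xs @ [x]) = frieze_step x * frieze_prod xs"
  by (simp add: frieze_prod_append)

lemma frieze_prod_append_Cons:
  "frieze_prod (A @ x # B) = frieze_prod B * frieze_step x * frieze_prod A"
  by (simp add: frieze_prod_append)

lemma frieze_prod_append_Cons_Cons:
  "frieze_prod (A @ x # B @ y # C)
     = frieze_prod C * (frieze_step y * frieze_prod B * frieze_step x) * frieze_prod A"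
  by (simp add: frieze_prod_append mult.assoc)

lemma det2_frieze_prod: "det2 (frieze_prod xs) = 1"
  by (induct xs) (auto simp: det2_mult one_mat2_def frieze_step_def)

lemma friese_seq_frieze_prod:
  "friese_seq a N k (Suc d) = mat2_11 (frieze_prod (map (\<lambda>t. a ((k+t+1) mod N)) [0..<d]))
   \<and> friese_seq a N k d = mat2_21 (frieze_prod (map (\<lambda>t. a ((k+t+1) mod N)) [0..<d]))"
proof (induct d)
  case (Suc d)
  obtain A B C D where "frieze_prod (map (\<lambda>t. a ((k+t+1) mod N)) [0..<d]) = Mat2 A B C D"
    by (cases "frieze_prod (map (\<lambda>t. a ((k+t+1) mod N)) [0..<d])")
  with Suc show ?case by (simp add: frieze_prod_snoc frieze_step_def)
qed (simp add: one_mat2_def)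

text \<open>If the product over a polygon is -1, gluing it onto another one along a diagonal c b only
  adds its quiddities at c and b to those of the other polygon.\<close>
lemma frieze_sandwich_eq_minus_one:
  assumes "frieze_step c * P * frieze_step b = - 1"
  shows "P = Mat2 1 (- b) c (1 - c * b)"
proof -
  obtain p q r s where P: "P = Mat2 p q r s" by (cases P)
  from assms have h: "(c*p - r)*b + (c*q - s) = -1" "-(c*p - r) = 0" "p*b + q = 0" "-p = -1"
    by (auto simp: P frieze_step_def one_mat2_def algebra_simps)
  then have "p = 1" "r = c" "q = - b" by auto
  with h(1) show ?thesis by (simp add: P algebra_simps)
qed

lemma frieze_step_glue:
  assumes "frieze_step c * P * frieze_step b = - 1"
  shows "frieze_step (c + d) * P * frieze_step (b + e) = frieze_step d * frieze_step e"
  using frieze_sandwich_eq_minus_one[OF assms] by (simp add: frieze_step_def algebra_simps)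

lemma mat2_11_glue_right:
  assumes "frieze_step c * P * frieze_step b = - 1"
  shows "mat2_11 (P * frieze_step (b + e) * Q) = mat2_11 (frieze_step e * Q)"
  using frieze_sandwich_eq_minus_one[OF assms] by (cases Q) (simp add: frieze_step_def algebra_simps)

lemma mat2_11_glue_left:
  assumes "frieze_step c * P * frieze_step b = - 1"
  shows "mat2_11 (Z * (frieze_step (c + e) * P)) = mat2_11 (Z * frieze_step e)"
  using frieze_sandwich_eq_minus_one[OF assms] by (cases Z) (simp add: frieze_step_def algebra_simps)

lemma mat2_11_frieze_step_add:
  "mat2_11 (P * frieze_step (b + e) * Q)
     = mat2_11 (P * frieze_step b) * mat2_11 Q + mat2_11 P * mat2_11 (frieze_step e * Q)"
  by (cases P; cases Q) (simp add: frieze_step_def algebra_simps)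

lemma frieze_diamond:
  assumes "det2 Q = 1"
  shows "mat2_11 (Q * frieze_step x) * mat2_11 (frieze_step y * Q)
           - mat2_11 (frieze_step y * Q * frieze_step x) * mat2_11 Q = 1"
  using assms by (cases Q) (simp add: frieze_step_def algebra_simps)

section \<open>Cyclic successors in a list\<close>

fun consecutive :: "'a list \<Rightarrow> 'a \<Rightarrow> 'a \<Rightarrow> bool" where
  "consecutive (a # b # rest) x y \<longleftrightarrow> (a = x \<and> b = y) \<or> consecutive (b # rest) x y"
| "consecutive _ x y \<longleftrightarrow> False"

lemma consecutive_Cons:
  "consecutive (a # rest) x y \<longleftrightarrow> (rest \<noteq> [] \<and> a = x \<and> hd rest = y) \<or> consecutive rest x y"
  by (cases rest) auto

lemma consecutive_append:
  "consecutive (xs @ ys) x y \<longleftrightarrow>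
     consecutive xs x y \<or> consecutive ys x y \<or> (xs \<noteq> [] \<and> ys \<noteq> [] \<and> x = last xs \<and> y = hd ys)"
  by (induct xs) (auto simp: consecutive_Cons)

lemma consecutive_in_set: "consecutive xs x y \<Longrightarrow> x \<in> set xs \<and> y \<in> set xs"
  by (induct xs x y rule: consecutive.induct) auto

lemma consecutive_iff_nth:
  "consecutive xs x y \<longleftrightarrow> (\<exists>i. Suc i < length xs \<and> xs ! i = x \<and> xs ! Suc i = y)"
proof (induct xs)
  case (Cons a xs)
  show ?case
  proof
    assume "consecutive (a # xs) x y"
    then consider "xs \<noteq> [] \<and> a = x \<and> hd xs = y" | "consecutive xs x y"
      by (auto simp: consecutive_Cons)
    then show "\<exists>i. Suc i < length (a # xs) \<and> (a # xs) ! i = x \<and> (a # xs) ! Suc i = y"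
    proof cases
      case 1 then show ?thesis by (intro exI[of _ 0]) (auto simp: hd_conv_nth)
    next
      case 2
      with Cons obtain i where "Suc i < length xs" "xs ! i = x" "xs ! Suc i = y" by auto
      then show ?thesis by (intro exI[of _ "Suc i"]) auto
    qed
  next
    assume "\<exists>i. Suc i < length (a # xs) \<and> (a # xs) ! i = x \<and> (a # xs) ! Suc i = y"
    then obtain i where i: "Suc i < length (a # xs)" "(a # xs) ! i = x" "(a # xs) ! Suc i = y"
      by blast
    show "consecutive (a # xs) x y"
    proof (cases i)
      case 0 with i show ?thesis by (cases xs) auto
    next
      case (Suc j) with i Cons show ?thesis by (auto simp: consecutive_Cons)
    qed
  qed
qed simp

definition cyc_consecutive :: "'a list \<Rightarrow> 'a \<Rightarrow> 'a \<Rightarrow> bool" where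
  "cyc_consecutive vs x y \<longleftrightarrow> consecutive vs x y \<or> (vs \<noteq> [] \<and> x = last vs \<and> y = hd vs)"

lemma cyc_consecutive_rotate1: "cyc_consecutive (rotate1 vs) x y \<longleftrightarrow> cyc_consecutive vs x y"
  by (cases vs) (auto simp: cyc_consecutive_def consecutive_append consecutive_Cons)

lemma cyc_consecutive_rotate: "cyc_consecutive (rotate n vs) x y \<longleftrightarrow> cyc_consecutive vs x y"
  by (induct n) (auto simp: cyc_consecutive_rotate1)

lemma cyc_consecutive_nth_iff:
  assumes "distinct vs" "u < length vs" "v < length vs"
  shows "cyc_consecutive vs (vs ! u) (vs ! v) \<longleftrightarrow> v = Suc u mod length vs"
proof -
  have "consecutive vs (vs ! u) (vs ! v) \<longleftrightarrow> Suc u < length vs \<and> v = Suc u"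
    using assms by (auto simp: consecutive_iff_nth nth_eq_iff_index_eq)
  moreover have "(vs \<noteq> [] \<and> vs ! u = last vs \<and> vs ! v = hd vs) \<longleftrightarrow> Suc u = length vs \<and> v = 0"
    using assms by (auto simp: last_conv_nth hd_conv_nth nth_eq_iff_index_eq)
  ultimately show ?thesis
    using assms unfolding cyc_consecutive_def by (cases "Suc u < length vs") (auto simp: mod_if)
qed

lemma cyc_consecutive_infix_iff:
  assumes "distinct (A @ B @ C)" and "x \<in> set B" and "y \<in> set B"
  shows "cyc_consecutive (A @ B @ C) x y
           \<longleftrightarrow> consecutive B x y \<or> (A = [] \<and> C = [] \<and> x = last B \<and> y = hd B)"
proof -
  have "x \<notin> set A" "x \<notin> set C" "y \<notin> set A" "y \<notin> set C"
    using assms by auto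
  then show ?thesis
    using assms(2,3) consecutive_in_set[of A x y] consecutive_in_set[of C x y]
    unfolding cyc_consecutive_def consecutive_append
    by (auto simp: last_append hd_append split: if_splits)
qed

lemma not_cyc_consecutive_append:
  assumes "distinct (B @ C)" and "x \<in> set C" and "y \<in> set B"
  shows "x \<noteq> last B \<Longrightarrow> y \<noteq> hd B \<Longrightarrow> \<not> cyc_consecutive (B @ C) x y"
    and "y \<noteq> last B \<Longrightarrow> \<not> cyc_consecutive (B @ C) y x"
proof -
  have "x \<notin> set B" "y \<notin> set C"
    using assms by auto
  then show "x \<noteq> last B \<Longrightarrow> y \<noteq> hd B \<Longrightarrow> \<not> cyc_consecutive (B @ C) x y"
    and "y \<noteq> last B \<Longrightarrow> \<not> cyc_consecutive (B @ C) y x"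
    using assms(2,3) consecutive_in_set[of B x y] consecutive_in_set[of C x y]
      consecutive_in_set[of B y x] consecutive_in_set[of C y x]
    unfolding cyc_consecutive_def consecutive_append
    by (auto simp: last_append hd_append split: if_splits)
qed

lemma rotate_past_infix:
  "rotate (length xs + 1 + length ys) (xs @ u # ys @ w # zs) = w # zs @ xs @ u # ys"
proof -
  have "xs @ u # ys @ w # zs = (xs @ u # ys) @ (w # zs)" by simp
  moreover have "length xs + 1 + length ys = length (xs @ u # ys)" by simp
  ultimately show ?thesis by (metis append.assoc append_Cons rotate_append)
qed

lemma cyc_consecutive_past_infix:
  "cyc_consecutive (xs @ u # ys @ w # zs) = cyc_consecutive (w # zs @ xs @ u # ys)"
  by (intro ext) (metis cyc_consecutive_rotate rotate_past_infix)

lemma append_Cons_eq_imp_prefix_eq: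
  assumes "distinct (pre @ y # post)" and "pre @ y # post = A @ y # B"
  shows "pre = A"
proof -
  have "y \<notin> set pre" "y \<notin> set post" using assms(1) by auto
  then show ?thesis using assms(2) append_Cons_eq_iff[of y pre post A B] by simp
qed

lemma card_le_2_if_subset_doubleton:
  assumes "S \<subseteq> {a, b}"
  shows "card S \<le> 2"
proof -
  have "card S \<le> card {a, b}" using assms by (intro card_mono) auto
  also have "\<dots> \<le> 2" by (simp add: card_insert_if)
  finally show ?thesis .
qed

section \<open>Friezes of triangulated polygons\<close>

locale chords =
  fixes chord :: "'a \<Rightarrow> 'a \<Rightarrow> bool"
  assumes chord_sym: "chord x y \<longleftrightarrow> chord y x"
begin

text \<open>A distinct list vs is a convex polygon with its vertices in cyclic order, and chord
  marks its diagonals.\<close>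

definition joined :: "'a list \<Rightarrow> 'a \<Rightarrow> 'a \<Rightarrow> bool" where
  "joined vs x y \<longleftrightarrow> x \<in> set vs \<and> y \<in> set vs \<and> x \<noteq> y \<and>
     (cyc_consecutive vs x y \<or> cyc_consecutive vs y x \<or> chord x y)"

definition triangles_at :: "'a list \<Rightarrow> 'a \<Rightarrow> 'a set set" where
  "triangles_at vs x =
     {S. S \<subseteq> set vs \<and> card S = 3 \<and> x \<in> S \<and> (\<forall>a\<in>S. \<forall>b\<in>S. a \<noteq> b \<longrightarrow> joined vs a b)}"

definition quiddity :: "'a list \<Rightarrow> 'a \<Rightarrow> int" where
  "quiddity vs x = int (card (triangles_at vs x))"

text \<open>If vs = s # pre @ y # post, then frieze_entry vs pre is the Friese number of the pair
  (s, y).\<close>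
abbreviation frieze_entry :: "'a list \<Rightarrow> 'a list \<Rightarrow> int" where
  "frieze_entry vs pre \<equiv> mat2_11 (frieze_prod (map (quiddity vs) pre))"

definition frieze_positive_from_head :: "'a list \<Rightarrow> bool" where
  "frieze_positive_from_head vs \<longleftrightarrow> (\<forall>s pre y post. vs = s # pre @ y # post \<longrightarrow>
      1 \<le> frieze_entry vs pre \<and> (frieze_entry vs pre = 1 \<longleftrightarrow> joined vs s y))"

definition frieze_positive :: "'a list \<Rightarrow> bool" where
  "frieze_positive vs \<longleftrightarrow> (\<forall>n. frieze_positive_from_head (rotate n vs))"

definition conway_coxeter :: "'a list \<Rightarrow> bool" where
  "conway_coxeter vs \<longleftrightarrow> frieze_prod (map (quiddity vs) vs) = - 1"

lemma joined_sym: "joined vs x y \<longleftrightarrow> joined vs y x"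
  using chord_sym by (auto simp: joined_def)

lemma finite_triangles_at: "finite (triangles_at vs x)"
  by (rule finite_subset[of _ "Pow (set vs)"]) (auto simp: triangles_at_def)

lemma joined_rotate [simp]: "joined (rotate n vs) = joined vs"
  by (intro ext) (simp add: joined_def cyc_consecutive_rotate)

lemma triangles_at_rotate [simp]: "triangles_at (rotate n vs) = triangles_at vs"
  by (intro ext) (simp add: triangles_at_def)

lemma quiddity_rotate [simp]: "quiddity (rotate n vs) = quiddity vs"
  by (intro ext) (simp add: quiddity_def)

lemma conway_coxeter_rotate1:
  assumes "conway_coxeter vs"
  shows "conway_coxeter (rotate1 vs)"
proof (cases vs)
  case (Cons v rest)
  with assms have "frieze_prod (map (quiddity vs) rest) * frieze_step (quiddity vs v) = - 1"
    by (simp add: conway_coxeter_def)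
  then have "frieze_step (quiddity vs v) * frieze_prod (map (quiddity vs) rest) = - 1"
    by (rule mult_eq_minus_one_commute) (simp add: frieze_step_def)
  moreover have "quiddity (rotate1 vs) = quiddity vs"
    using quiddity_rotate[of 1 vs] by simp
  ultimately show ?thesis
    by (simp add: conway_coxeter_def Cons frieze_prod_append)
qed (use assms in simp)

lemma conway_coxeter_rotate: "conway_coxeter vs \<Longrightarrow> conway_coxeter (rotate n vs)"
  by (induct n) (auto simp: conway_coxeter_rotate1)

lemma frieze_positive_rotate: "frieze_positive vs \<Longrightarrow> frieze_positive (rotate n vs)"
  by (simp add: frieze_positive_def rotate_rotate)

lemma frieze_positiveD:
  assumes "frieze_positive vs" and "rotate n vs = s # pre @ y # post"
  shows "1 \<le> frieze_entry vs pre \<and> (frieze_entry vs pre = 1 \<longleftrightarrow> joined vs s y)"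
  using assms unfolding frieze_positive_def frieze_positive_from_head_def
  by (metis joined_rotate quiddity_rotate)

lemma frieze_positive_headD:
  "frieze_positive vs \<Longrightarrow> vs = s # pre @ y # post \<Longrightarrow>
     1 \<le> frieze_entry vs pre \<and> (frieze_entry vs pre = 1 \<longleftrightarrow> joined vs s y)"
  using frieze_positiveD[of vs 0] by simp

lemma triangles_at_digon: "triangles_at [a, b] v = {}"
proof -
  have "card S \<noteq> 3" if "S \<subseteq> {a, b}" for S
    using card_le_2_if_subset_doubleton[OF that] by simp
  then show ?thesis by (auto simp: triangles_at_def)
qed

lemma triangles_at_triangle:
  assumes "distinct [a, b, c]" and "v \<in> {a, b, c}"
  shows "triangles_at [a, b, c] v = {{a, b, c}}"
proof (intro set_eqI iffI)
  have card: "card {a, b, c} = 3" using assms by simp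
  fix S
  have "S \<subseteq> {a, b, c} \<Longrightarrow> card S = 3 \<Longrightarrow> S = {a, b, c}"
    using card by (intro card_subset_eq) auto
  then show "S \<in> triangles_at [a, b, c] v \<Longrightarrow> S \<in> {{a, b, c}}"
    by (simp add: triangles_at_def)
  have "joined [a, b, c] x y" if "x \<in> {a, b, c}" "y \<in> {a, b, c}" "x \<noteq> y" for x y
    using assms that by (auto simp: joined_def cyc_consecutive_def)
  then show "S \<in> {{a, b, c}} \<Longrightarrow> S \<in> triangles_at [a, b, c] v"
    using assms card by (simp add: triangles_at_def)
qed

lemma quiddity_triangle: "distinct [a, b, c] \<Longrightarrow> v \<in> {a, b, c} \<Longrightarrow> quiddity [a, b, c] v = 1"
  by (simp add: quiddity_def triangles_at_triangle)

lemma frieze_positive_from_head_digon: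
  assumes "a \<noteq> b"
  shows "frieze_positive_from_head [a, b]"
  unfolding frieze_positive_from_head_def
proof (intro allI impI)
  fix s pre y post assume "[a, b] = s # pre @ y # post"
  then have "s = a" "pre = []" "y = b" by (auto simp: Cons_eq_append_conv)
  then show "1 \<le> frieze_entry [a, b] pre \<and> (frieze_entry [a, b] pre = 1 \<longleftrightarrow> joined [a, b] s y)"
    using assms by (simp add: one_mat2_def joined_def cyc_consecutive_def)
qed

lemma frieze_positive_from_head_triangle:
  assumes "distinct [a, b, c]"
  shows "frieze_positive_from_head [a, b, c]"
  unfolding frieze_positive_from_head_def
proof (intro allI impI)
  fix s pre y post assume split: "[a, b, c] = s # pre @ y # post"
  then have "pre = [] \<and> y = b \<or> pre = [b] \<and> y = c"
    by (auto simp: Cons_eq_append_conv)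
  moreover have "joined [a, b, c] a b" "joined [a, b, c] a c"
    using assms by (auto simp: joined_def cyc_consecutive_def)
  ultimately show "1 \<le> frieze_entry [a, b, c] pre \<and>
      (frieze_entry [a, b, c] pre = 1 \<longleftrightarrow> joined [a, b, c] s y)"
    using split quiddity_triangle[OF assms, of b]
    by (auto simp: one_mat2_def frieze_step_def)
qed

lemma frieze_positive_digon:
  assumes "a \<noteq> b"
  shows "frieze_positive [a, b]"
  unfolding frieze_positive_def
proof
  fix n
  have "\<exists>x y. vs = [x, y]" if "length vs = 2" for vs :: "'a list"
    using that by (cases vs; cases "tl vs") auto
  from this[of "rotate n [a, b]"] obtain x y where xy: "rotate n [a, b] = [x, y]" by auto
  have "distinct (rotate n [a, b])" using assms by simp
  then have "distinct [x, y]" by (simp only: xy)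
  then show "frieze_positive_from_head (rotate n [a, b])"
    unfolding xy by (simp add: frieze_positive_from_head_digon)
qed

lemma frieze_positive_triangle:
  assumes "distinct [a, b, c]"
  shows "frieze_positive [a, b, c]"
  unfolding frieze_positive_def
proof
  fix n
  have "\<exists>x y z. vs = [x, y, z]" if "length vs = 3" for vs :: "'a list"
    using that by (cases vs; cases "tl vs"; cases "tl (tl vs)") auto
  from this[of "rotate n [a, b, c]"] obtain x y z where xyz: "rotate n [a, b, c] = [x, y, z]"
    by auto
  have "distinct (rotate n [a, b, c])" using assms by simp
  then have "distinct [x, y, z]" by (simp only: xyz)
  then show "frieze_positive_from_head (rotate n [a, b, c])"
    unfolding xyz by (rule frieze_positive_from_head_triangle)
qed

lemma conway_coxeter_digon: "conway_coxeter [a, b]"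
  by (simp add: conway_coxeter_def quiddity_def triangles_at_digon frieze_step_def one_mat2_def)

lemma conway_coxeter_triangle: "distinct [a, b, c] \<Longrightarrow> conway_coxeter [a, b, c]"
  by (simp add: conway_coxeter_def quiddity_triangle frieze_step_def one_mat2_def)

lemma frieze_positive_head_transfer:
  assumes "frieze_positive P" and "P = s # pre' @ y # post'"
    and "frieze_entry vs pre = frieze_entry P pre'" and "joined vs s y \<longleftrightarrow> joined P s y"
  shows "1 \<le> frieze_entry vs pre \<and> (frieze_entry vs pre = 1 \<longleftrightarrow> joined vs s y)"
  using frieze_positive_headD[OF assms(1,2)] assms(3,4) by simp

text \<open>Triangulated polygons, built by gluing two of them along a diagonal u w; the digon is
  the degenerate polygon bounded by a single diagonal.\<close>
inductive triangulated :: "'a list \<Rightarrow> bool" where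
  digon: "x \<noteq> y \<Longrightarrow> triangulated [x, y]"
| triangle: "distinct [x, y, z] \<Longrightarrow> triangulated [x, y, z]"
| glue: "distinct (xs @ u # ys @ w # zs) \<Longrightarrow> chord u w \<Longrightarrow>
    (\<forall>a\<in>set ys. \<forall>b\<in>set xs \<union> set zs. \<not> chord a b) \<Longrightarrow>
    triangulated (u # ys @ [w]) \<Longrightarrow> triangulated (xs @ [u, w] @ zs) \<Longrightarrow>
    triangulated (xs @ u # ys @ w # zs)"

end

section \<open>Gluing along a diagonal\<close>

locale chord_split = chords +
  fixes xs ys zs :: "'a list" and u w :: 'a
  assumes distinct_split: "distinct (xs @ u # ys @ w # zs)"
    and chord_u_w: "chord u w"
    and no_chord_across: "\<forall>a\<in>set ys. \<forall>b\<in>set xs \<union> set zs. \<not> chord a b"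

lemma (in chords) chord_splitI:
  assumes "distinct (xs @ u # ys @ w # zs)" and "chord u w"
    and "\<forall>a\<in>set ys. \<forall>b\<in>set xs \<union> set zs. \<not> chord a b"
  shows "chord_split chord xs ys zs u w"
  using assms chords_axioms by (simp add: chord_split_def chord_split_axioms_def)

context chord_split begin

lemma joined_glue_inner:
  assumes x: "x \<in> set (u # ys @ [w])" and y: "y \<in> set (u # ys @ [w])"
  shows "joined (xs @ u # ys @ w # zs) x y \<longleftrightarrow> joined (u # ys @ [w]) x y"
proof -
  have "distinct (xs @ (u # ys @ [w]) @ zs)" using distinct_split by simp
  then have whole: "cyc_consecutive (xs @ u # ys @ w # zs) a b \<longleftrightarrow>
      consecutive (u # ys @ [w]) a b \<or> (xs = [] \<and> zs = [] \<and> a = w \<and> b = u)"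
    if "a \<in> set (u # ys @ [w])" "b \<in> set (u # ys @ [w])" for a b
    using cyc_consecutive_infix_iff[of xs "u # ys @ [w]" zs, OF _ that] by simp
  have piece: "cyc_consecutive (u # ys @ [w]) a b \<longleftrightarrow>
      consecutive (u # ys @ [w]) a b \<or> (a = w \<and> b = u)" for a b
    by (simp add: cyc_consecutive_def)
  have "x \<in> set (xs @ u # ys @ w # zs)" "y \<in> set (xs @ u # ys @ w # zs)"
    using x y by auto
  then show ?thesis
    unfolding joined_def whole[OF x y] whole[OF y x] piece
    using x y chord_u_w chord_sym[of u w] by blast
qed

lemma joined_glue_outer:
  assumes x: "x \<in> set (xs @ [u, w] @ zs)" and y: "y \<in> set (xs @ [u, w] @ zs)"
  shows "joined (xs @ u # ys @ w # zs) x y \<longleftrightarrow> joined (xs @ [u, w] @ zs) x y"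
proof -
  let ?B = "w # zs @ xs @ [u]"
  have "distinct ([] @ ?B @ ys)" using distinct_split by auto
  then have whole: "cyc_consecutive (xs @ u # ys @ w # zs) a b \<longleftrightarrow>
      consecutive ?B a b \<or> (ys = [] \<and> a = u \<and> b = w)"
    if "a \<in> set ?B" "b \<in> set ?B" for a b
    unfolding cyc_consecutive_past_infix
    using cyc_consecutive_infix_iff[of "[]" ?B ys, OF _ that] by simp
  have piece: "cyc_consecutive (xs @ [u, w] @ zs) a b \<longleftrightarrow>
      consecutive ?B a b \<or> (a = u \<and> b = w)" for a b
    using cyc_consecutive_past_infix[of xs u "[]" w zs] by (simp add: cyc_consecutive_def)
  have xB: "x \<in> set ?B" and yB: "y \<in> set ?B" using x y by auto
  have "x \<in> set (xs @ u # ys @ w # zs)" "y \<in> set (xs @ u # ys @ w # zs)"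
    using x y by auto
  then show ?thesis
    unfolding joined_def whole[OF xB yB] whole[OF yB xB] piece
    using x y chord_u_w chord_sym[of u w] by blast
qed

lemma not_joined_across:
  assumes "x \<in> set ys" and "y \<in> set xs \<union> set zs"
  shows "\<not> joined (xs @ u # ys @ w # zs) x y"
proof -
  let ?B = "w # zs @ xs @ [u]"
  have "distinct (?B @ ys)" and "y \<in> set ?B" and "x \<noteq> last ?B" "y \<noteq> hd ?B"
    using distinct_split assms by auto
  moreover have "cyc_consecutive (xs @ u # ys @ w # zs) = cyc_consecutive (?B @ ys)"
    by (simp add: cyc_consecutive_past_infix)
  ultimately show ?thesis
    using not_cyc_consecutive_append[of ?B ys x y] assms no_chord_across chord_sym
    unfolding joined_def by auto
qed

lemma triangle_within_glue_piece:
  assumes "S \<in> triangles_at (xs @ u # ys @ w # zs) x"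
  shows "S \<subseteq> set (u # ys @ [w]) \<or> S \<subseteq> set (xs @ [u, w] @ zs)"
proof (cases "\<exists>y\<in>S. y \<in> set ys")
  case True
  then obtain y where y: "y \<in> S" "y \<in> set ys" by blast
  have "z \<in> set (u # ys @ [w])" if "z \<in> S" for z
  proof (rule ccontr)
    assume "z \<notin> set (u # ys @ [w])"
    with assms that have "z \<in> set xs \<union> set zs" by (auto simp: triangles_at_def)
    moreover from this have "z \<noteq> y" using distinct_split y by auto
    with assms that y have "joined (xs @ u # ys @ w # zs) y z" by (auto simp: triangles_at_def)
    ultimately show False using not_joined_across[OF y(2)] by blast
  qed
  then show ?thesis by blast
next
  case False
  with assms show ?thesis by (auto simp: triangles_at_def)
qed

lemma triangles_at_glue_piece_iff:
  assumes "S \<subseteq> set P" and "set P \<subseteq> set (xs @ u # ys @ w # zs)"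
    and "\<And>a b. a \<in> set P \<Longrightarrow> b \<in> set P \<Longrightarrow> joined (xs @ u # ys @ w # zs) a b \<longleftrightarrow> joined P a b"
  shows "S \<in> triangles_at (xs @ u # ys @ w # zs) x \<longleftrightarrow> S \<in> triangles_at P x"
proof -
  have "(\<forall>a\<in>S. \<forall>b\<in>S. a \<noteq> b \<longrightarrow> joined (xs @ u # ys @ w # zs) a b) \<longleftrightarrow>
        (\<forall>a\<in>S. \<forall>b\<in>S. a \<noteq> b \<longrightarrow> joined P a b)"
    using assms(1,3) by blast
  then show ?thesis using assms(1,2) unfolding triangles_at_def by blast
qed

lemma triangles_at_glue:
  shows "x \<in> set ys \<Longrightarrow> triangles_at (xs @ u # ys @ w # zs) x = triangles_at (u # ys @ [w]) x"
    and "x \<in> set xs \<union> set zs \<Longrightarrow>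
           triangles_at (xs @ u # ys @ w # zs) x = triangles_at (xs @ [u, w] @ zs) x"
    and "x \<in> {u, w} \<Longrightarrow> triangles_at (xs @ u # ys @ w # zs) x
           = triangles_at (u # ys @ [w]) x \<union> triangles_at (xs @ [u, w] @ zs) x"
proof -
  let ?vs = "xs @ u # ys @ w # zs" and ?p1 = "u # ys @ [w]" and ?p2 = "xs @ [u, w] @ zs"
  have in1: "S \<in> triangles_at ?vs x \<longleftrightarrow> S \<in> triangles_at ?p1 x" if "S \<subseteq> set ?p1" for S
    by (rule triangles_at_glue_piece_iff[OF that _ joined_glue_inner]) auto
  have in2: "S \<in> triangles_at ?vs x \<longleftrightarrow> S \<in> triangles_at ?p2 x" if "S \<subseteq> set ?p2" for S
    by (rule triangles_at_glue_piece_iff[OF that _ joined_glue_outer]) auto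
  have sub: "S \<subseteq> set P" and mem: "x \<in> S" if "S \<in> triangles_at P x" for S P
    using that by (auto simp: triangles_at_def)
  show "x \<in> {u, w} \<Longrightarrow> triangles_at ?vs x = triangles_at ?p1 x \<union> triangles_at ?p2 x"
  proof (intro set_eqI iffI)
    fix S assume "S \<in> triangles_at ?vs x"
    then show "S \<in> triangles_at ?p1 x \<union> triangles_at ?p2 x"
      using triangle_within_glue_piece[of S x] in1[of S] in2[of S] by blast
  next
    fix S assume "S \<in> triangles_at ?p1 x \<union> triangles_at ?p2 x"
    then show "S \<in> triangles_at ?vs x"
      using sub[of S ?p1 ] sub[of S ?p2] in1[of S] in2[of S] by blast
  qed
  show "x \<in> set ys \<Longrightarrow> triangles_at ?vs x = triangles_at ?p1 x"
  proof (intro set_eqI iffI)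
    fix S assume "x \<in> set ys" and S: "S \<in> triangles_at ?vs x"
    then have "\<not> S \<subseteq> set ?p2" using mem[OF S] distinct_split by auto
    then show "S \<in> triangles_at ?p1 x" using triangle_within_glue_piece[OF S] in1[of S] S by blast
  next
    fix S assume "S \<in> triangles_at ?p1 x"
    then show "S \<in> triangles_at ?vs x" using sub[of S ?p1] in1[of S] by blast
  qed
  show "x \<in> set xs \<union> set zs \<Longrightarrow> triangles_at ?vs x = triangles_at ?p2 x"
  proof (intro set_eqI iffI)
    fix S assume "x \<in> set xs \<union> set zs" and S: "S \<in> triangles_at ?vs x"
    then have "\<not> S \<subseteq> set ?p1" using mem[OF S] distinct_split by auto
    then show "S \<in> triangles_at ?p2 x" using triangle_within_glue_piece[OF S] in2[of S] S by blast
  next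
    fix S assume "S \<in> triangles_at ?p2 x"
    then show "S \<in> triangles_at ?vs x" using sub[of S ?p2] in2[of S] by blast
  qed
qed

lemma triangles_at_glue_disjoint:
  "triangles_at (u # ys @ [w]) x \<inter> triangles_at (xs @ [u, w] @ zs) x = {}"
proof -
  have "card S \<noteq> 3" if "S \<subseteq> set (u # ys @ [w])" "S \<subseteq> set (xs @ [u, w] @ zs)" for S
  proof -
    have "S \<subseteq> {u, w}" using that distinct_split by auto
    then show ?thesis using card_le_2_if_subset_doubleton by fastforce
  qed
  then show ?thesis by (auto simp: triangles_at_def)
qed

lemma quiddity_glue:
  shows "x \<in> set ys \<Longrightarrow> quiddity (xs @ u # ys @ w # zs) x = quiddity (u # ys @ [w]) x"
    and "x \<in> set xs \<union> set zs \<Longrightarrow>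
           quiddity (xs @ u # ys @ w # zs) x = quiddity (xs @ [u, w] @ zs) x"
    and "x \<in> {u, w} \<Longrightarrow> quiddity (xs @ u # ys @ w # zs) x
           = quiddity (u # ys @ [w]) x + quiddity (xs @ [u, w] @ zs) x"
  using triangles_at_glue triangles_at_glue_disjoint
    card_Un_disjoint[OF finite_triangles_at finite_triangles_at]
  by (simp_all add: quiddity_def)

lemma conway_coxeter_inner_glue:
  assumes "conway_coxeter (u # ys @ [w])"
  shows "frieze_step (quiddity (u # ys @ [w]) w) * frieze_prod (map (quiddity (u # ys @ [w])) ys)
           * frieze_step (quiddity (u # ys @ [w]) u) = - 1"
  using assms by (simp add: conway_coxeter_def frieze_prod_snoc mult.assoc)

lemma map_quiddity_glue:
  shows "set X \<subseteq> set ys \<Longrightarrow>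
           map (quiddity (xs @ u # ys @ w # zs)) X = map (quiddity (u # ys @ [w])) X"
    and "set X \<subseteq> set xs \<union> set zs \<Longrightarrow>
           map (quiddity (xs @ u # ys @ w # zs)) X = map (quiddity (xs @ [u, w] @ zs)) X"
  using quiddity_glue(1,2) by (auto intro!: map_ext)

lemma frieze_prod_glue_collapse:
  assumes cc: "conway_coxeter (u # ys @ [w])"
    and X: "set X \<subseteq> set xs \<union> set zs" and Z: "set Z \<subseteq> set xs \<union> set zs"
  shows "frieze_prod (map (quiddity (xs @ u # ys @ w # zs)) (X @ u # ys @ w # Z))
       = frieze_prod (map (quiddity (xs @ [u, w] @ zs)) (X @ u # w # Z))"
proof -
  let ?q1 = "quiddity (u # ys @ [w])" and ?q2 = "quiddity (xs @ [u, w] @ zs)"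
  have "frieze_prod (map (quiddity (xs @ u # ys @ w # zs)) (X @ u # ys @ w # Z))
      = frieze_prod (map ?q2 Z)
        * (frieze_step (?q1 w + ?q2 w) * frieze_prod (map ?q1 ys) * frieze_step (?q1 u + ?q2 u))
        * frieze_prod (map ?q2 X)"
    by (simp only: map_append list.map frieze_prod_append_Cons_Cons quiddity_glue(3)[OF insertI1]
        quiddity_glue(3)[OF insertI2[OF singletonI]] map_quiddity_glue X Z order_refl)
  also have "\<dots> = frieze_prod (map ?q2 Z) * (frieze_step (?q2 w) * frieze_step (?q2 u))
        * frieze_prod (map ?q2 X)"
    by (simp only: frieze_step_glue[OF conway_coxeter_inner_glue[OF cc]])
  also have "\<dots> = frieze_prod (map ?q2 (X @ u # w # Z))"
    by (simp add: frieze_prod_append mult.assoc)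
  finally show ?thesis .
qed

lemma conway_coxeter_glue:
  assumes "conway_coxeter (u # ys @ [w])" and "conway_coxeter (xs @ [u, w] @ zs)"
  shows "conway_coxeter (xs @ u # ys @ w # zs)"
  using frieze_prod_glue_collapse[OF assms(1), of xs zs] assms(2)
  by (simp add: conway_coxeter_def)

lemma frieze_entry_glue_to_end:
  assumes cc: "conway_coxeter (u # ys @ [w])" and X: "set X \<subseteq> set xs \<union> set zs"
  shows "frieze_entry (xs @ u # ys @ w # zs) (X @ u # ys)
       = frieze_entry (xs @ [u, w] @ zs) (X @ [u])"
proof -
  let ?q1 = "quiddity (u # ys @ [w])" and ?q2 = "quiddity (xs @ [u, w] @ zs)"
  have "frieze_entry (xs @ u # ys @ w # zs) (X @ u # ys)
      = mat2_11 (frieze_prod (map ?q1 ys) * frieze_step (?q1 u + ?q2 u) * frieze_prod (map ?q2 X))"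
    by (simp only: map_append list.map frieze_prod_append_Cons quiddity_glue(3)[OF insertI1]
        map_quiddity_glue X order_refl)
  also have "\<dots> = mat2_11 (frieze_step (?q2 u) * frieze_prod (map ?q2 X))"
    by (rule mat2_11_glue_right[OF conway_coxeter_inner_glue[OF cc]])
  also have "\<dots> = frieze_entry (xs @ [u, w] @ zs) (X @ [u])"
    by (simp add: frieze_prod_snoc)
  finally show ?thesis .
qed

lemma frieze_entry_glue_from_start:
  assumes cc: "conway_coxeter (u # ys @ [w])" and Z: "set Z \<subseteq> set xs \<union> set zs"
  shows "frieze_entry (xs @ u # ys @ w # zs) (ys @ w # Z)
       = frieze_entry (xs @ [u, w] @ zs) (w # Z)"
proof -
  let ?q1 = "quiddity (u # ys @ [w])" and ?q2 = "quiddity (xs @ [u, w] @ zs)"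
  have "frieze_entry (xs @ u # ys @ w # zs) (ys @ w # Z)
      = mat2_11 (frieze_prod (map ?q2 Z) * (frieze_step (?q1 w + ?q2 w) * frieze_prod (map ?q1 ys)))"
    by (simp only: map_append list.map frieze_prod_append_Cons quiddity_glue(3)[OF insertI2[OF singletonI]]
        mult.assoc map_quiddity_glue Z order_refl)
  also have "\<dots> = mat2_11 (frieze_prod (map ?q2 Z) * frieze_step (?q2 w))"
    by (rule mat2_11_glue_left[OF conway_coxeter_inner_glue[OF cc]])
  also have "\<dots> = frieze_entry (xs @ [u, w] @ zs) (w # Z)"
    by simp
  finally show ?thesis .
qed

lemma frieze_entry_across_ge_two:
  assumes fp1: "frieze_positive (u # ys @ [w])" and fp2: "frieze_positive (xs @ [u, w] @ zs)"
    and xs: "xs = x0 # xs'" and ys: "ys = ys1 @ y # ys2"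
  shows "2 \<le> frieze_entry (xs @ u # ys @ w # zs) (xs' @ u # ys1)"
proof -
  let ?q1 = "quiddity (u # ys @ [w])" and ?q2 = "quiddity (xs @ [u, w] @ zs)"
  have "set ys1 \<subseteq> set ys" "set xs' \<subseteq> set xs \<union> set zs" using xs ys by auto
  then have "frieze_entry (xs @ u # ys @ w # zs) (xs' @ u # ys1)
      = mat2_11 (frieze_prod (map ?q1 ys1) * frieze_step (?q1 u + ?q2 u) * frieze_prod (map ?q2 xs'))"
    by (simp only: map_append list.map frieze_prod_append_Cons quiddity_glue(3)[OF insertI1]
        map_quiddity_glue)
  also have "\<dots> = frieze_entry (u # ys @ [w]) (u # ys1) * frieze_entry (xs @ [u, w] @ zs) xs'
      + frieze_entry (u # ys @ [w]) ys1 * frieze_entry (xs @ [u, w] @ zs) (xs' @ [u])"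
    by (simp add: mat2_11_frieze_step_add frieze_prod_snoc)
  finally have entry: "frieze_entry (xs @ u # ys @ w # zs) (xs' @ u # ys1) = \<dots>" .
  have "rotate (length (u # ys)) (u # ys @ [w]) = w # (u # ys1) @ y # ys2"
    using rotate_append[of "u # ys" "[w]"] ys by simp
  then have "1 \<le> frieze_entry (u # ys @ [w]) (u # ys1)"
    using frieze_positiveD[OF fp1] by blast
  moreover have "1 \<le> frieze_entry (xs @ [u, w] @ zs) xs'"
    using frieze_positive_headD[OF fp2, of x0 xs' u "w # zs"] xs by simp
  moreover have "1 \<le> frieze_entry (u # ys @ [w]) ys1"
    using frieze_positive_headD[OF fp1, of u ys1 y "ys2 @ [w]"] ys by simp
  moreover have "1 \<le> frieze_entry (xs @ [u, w] @ zs) (xs' @ [u])"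
    using frieze_positive_headD[OF fp2, of x0 "xs' @ [u]" w zs] xs by simp
  moreover have "1 \<le> a * b" if "1 \<le> a" "1 \<le> b" for a b :: int
    using mult_mono[of 1 a 1 b] that by simp
  ultimately show ?thesis unfolding entry by (smt (verit))
qed

lemma frieze_head_via_outer:
  assumes fp2: "frieze_positive (xs @ [u, w] @ zs)"
    and outer: "xs @ [u, w] @ zs = s # pre' @ y # post'"
    and entry: "frieze_entry (xs @ u # ys @ w # zs) pre = frieze_entry (xs @ [u, w] @ zs) pre'"
  shows "1 \<le> frieze_entry (xs @ u # ys @ w # zs) pre \<and>
     (frieze_entry (xs @ u # ys @ w # zs) pre = 1 \<longleftrightarrow> joined (xs @ u # ys @ w # zs) s y)"
proof (rule frieze_positive_head_transfer[OF fp2 outer entry])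
  have "s \<in> set (xs @ [u, w] @ zs)" "y \<in> set (xs @ [u, w] @ zs)"
    unfolding outer by auto
  then show "joined (xs @ u # ys @ w # zs) s y \<longleftrightarrow> joined (xs @ [u, w] @ zs) s y"
    by (rule joined_glue_outer)
qed

lemma frieze_head_via_inner:
  assumes fp1: "frieze_positive (u # ys @ [w])"
    and inner: "u # ys @ [w] = s # pre' @ y # post'"
    and entry: "frieze_entry (xs @ u # ys @ w # zs) pre = frieze_entry (u # ys @ [w]) pre'"
  shows "1 \<le> frieze_entry (xs @ u # ys @ w # zs) pre \<and>
     (frieze_entry (xs @ u # ys @ w # zs) pre = 1 \<longleftrightarrow> joined (xs @ u # ys @ w # zs) s y)"
proof (rule frieze_positive_head_transfer[OF fp1 inner entry])
  have "s \<in> set (u # ys @ [w])" "y \<in> set (u # ys @ [w])"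
    unfolding inner by auto
  then show "joined (xs @ u # ys @ w # zs) s y \<longleftrightarrow> joined (u # ys @ [w]) s y"
    by (rule joined_glue_inner)
qed

text \<open>Walking from a vertex of xs: up to u the walk stays in the outer piece, inside ys the
  entry is at least 2, and from w on the inner piece drops out of the product.\<close>
lemma frieze_positive_from_head_glue_outer_start:
  assumes cc1: "conway_coxeter (u # ys @ [w])" and fp1: "frieze_positive (u # ys @ [w])"
    and fp2: "frieze_positive (xs @ [u, w] @ zs)" and xs: "xs = x0 # xs'"
  shows "frieze_positive_from_head (xs @ u # ys @ w # zs)"
  unfolding frieze_positive_from_head_def
proof (intro allI impI)
  fix s pre y post assume split: "xs @ u # ys @ w # zs = s # pre @ y # post"
  have s: "s = x0" and rest: "pre @ y # post = xs' @ u # ys @ w # zs"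
    using split xs by auto
  have prefix: "pre = A" if "pre @ y # post = A @ y # B" for A B
    using append_Cons_eq_imp_prefix_eq distinct_split split that by (metis distinct.simps(2))
  have "y \<in> set (xs' @ u # ys @ w # zs)" unfolding rest[symmetric] by simp
  then consider A B where "xs' = A @ y # B" | "y = u" | A B where "ys = A @ y # B"
    | "y = w" | A B where "zs = A @ y # B"
    by (auto dest: split_list)
  then show "1 \<le> frieze_entry (xs @ u # ys @ w # zs) pre \<and>
      (frieze_entry (xs @ u # ys @ w # zs) pre = 1 \<longleftrightarrow> joined (xs @ u # ys @ w # zs) s y)"
  proof cases
    case (1 A B)
    with rest have pre: "pre = A" by (intro prefix) simp
    have "set A \<subseteq> set xs \<union> set zs" using xs 1 by auto
    show ?thesis
    proof (rule frieze_head_via_outer[OF fp2])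
      show "xs @ [u, w] @ zs = s # A @ y # (B @ u # w # zs)" using xs 1 s by simp
      show "frieze_entry (xs @ u # ys @ w # zs) pre = frieze_entry (xs @ [u, w] @ zs) A"
        by (simp only: pre map_quiddity_glue(2)[OF \<open>set A \<subseteq> _\<close>])
    qed
  next
    case 2
    with rest have pre: "pre = xs'" by (intro prefix) simp
    have "set xs' \<subseteq> set xs \<union> set zs" using xs by auto
    show ?thesis
    proof (rule frieze_head_via_outer[OF fp2])
      show "xs @ [u, w] @ zs = s # xs' @ y # (w # zs)" using xs 2 s by simp
      show "frieze_entry (xs @ u # ys @ w # zs) pre = frieze_entry (xs @ [u, w] @ zs) xs'"
        by (simp only: pre map_quiddity_glue(2)[OF \<open>set xs' \<subseteq> _\<close>])
    qed
  next
    case (3 A B)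
    with rest have "pre = xs' @ u # A" by (intro prefix) simp
    moreover have "\<not> joined (xs @ u # ys @ w # zs) s y"
      using not_joined_across[of y s] joined_sym 3 xs s by auto
    ultimately show ?thesis
      using frieze_entry_across_ge_two[OF fp1 fp2 xs 3] by simp
  next
    case 4
    with rest have pre: "pre = xs' @ u # ys" by (intro prefix) simp
    show ?thesis
    proof (rule frieze_head_via_outer[OF fp2])
      show "xs @ [u, w] @ zs = s # (xs' @ [u]) @ y # zs" using xs 4 s by simp
      show "frieze_entry (xs @ u # ys @ w # zs) pre = frieze_entry (xs @ [u, w] @ zs) (xs' @ [u])"
        unfolding pre by (rule frieze_entry_glue_to_end[OF cc1]) (use xs in auto)
    qed
  next
    case (5 A B)
    with rest have pre: "pre = xs' @ u # ys @ w # A" by (intro prefix) simp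
    show ?thesis
    proof (rule frieze_head_via_outer[OF fp2])
      show "xs @ [u, w] @ zs = s # (xs' @ u # w # A) @ y # B" using xs 5 s by simp
      show "frieze_entry (xs @ u # ys @ w # zs) pre = frieze_entry (xs @ [u, w] @ zs) (xs' @ u # w # A)"
        unfolding pre by (subst frieze_prod_glue_collapse[OF cc1]) (use xs 5 in auto)
    qed
  qed
qed

lemma frieze_positive_from_head_glue_inner_start:
  assumes cc1: "conway_coxeter (u # ys @ [w])" and fp1: "frieze_positive (u # ys @ [w])"
    and fp2: "frieze_positive (xs @ [u, w] @ zs)" and xs: "xs = []"
  shows "frieze_positive_from_head (xs @ u # ys @ w # zs)"
  unfolding frieze_positive_from_head_def
proof (intro allI impI)
  fix s pre y post assume split: "xs @ u # ys @ w # zs = s # pre @ y # post"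
  have s: "s = u" and rest: "pre @ y # post = ys @ w # zs"
    using split xs by auto
  have prefix: "pre = A" if "pre @ y # post = A @ y # B" for A B
    using append_Cons_eq_imp_prefix_eq distinct_split split that by (metis distinct.simps(2))
  have "y \<in> set (ys @ w # zs)" unfolding rest[symmetric] by simp
  then consider A B where "ys = A @ y # B" | "y = w" | A B where "zs = A @ y # B"
    by (auto dest: split_list)
  then show "1 \<le> frieze_entry (xs @ u # ys @ w # zs) pre \<and>
      (frieze_entry (xs @ u # ys @ w # zs) pre = 1 \<longleftrightarrow> joined (xs @ u # ys @ w # zs) s y)"
  proof cases
    case (1 A B)
    with rest have pre: "pre = A" by (intro prefix) simp
    have "set A \<subseteq> set ys" using 1 by auto
    show ?thesis
    proof (rule frieze_head_via_inner[OF fp1])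
      show "u # ys @ [w] = s # A @ y # (B @ [w])" using 1 s by simp
      show "frieze_entry (xs @ u # ys @ w # zs) pre = frieze_entry (u # ys @ [w]) A"
        by (simp only: pre map_quiddity_glue(1)[OF \<open>set A \<subseteq> _\<close>])
    qed
  next
    case 2
    with rest have pre: "pre = ys" by (intro prefix) simp
    show ?thesis
    proof (rule frieze_head_via_inner[OF fp1])
      show "u # ys @ [w] = s # ys @ y # []" using 2 s by simp
      show "frieze_entry (xs @ u # ys @ w # zs) pre = frieze_entry (u # ys @ [w]) ys"
        by (simp only: pre map_quiddity_glue(1)[OF order_refl])
    qed
  next
    case (3 A B)
    with rest have pre: "pre = ys @ w # A" by (intro prefix) simp
    show ?thesis
    proof (rule frieze_head_via_outer[OF fp2])
      show "xs @ [u, w] @ zs = s # (w # A) @ y # B" using xs 3 s by simp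
      show "frieze_entry (xs @ u # ys @ w # zs) pre = frieze_entry (xs @ [u, w] @ zs) (w # A)"
        unfolding pre by (rule frieze_entry_glue_from_start[OF cc1]) (use 3 in auto)
    qed
  qed
qed

lemma frieze_positive_from_head_glue:
  assumes "conway_coxeter (u # ys @ [w])" and "frieze_positive (u # ys @ [w])"
    and "frieze_positive (xs @ [u, w] @ zs)"
  shows "frieze_positive_from_head (xs @ u # ys @ w # zs)"
  using frieze_positive_from_head_glue_outer_start[OF assms]
    frieze_positive_from_head_glue_inner_start[OF assms]
  by (cases xs) auto

lemma chord_split_reorder:
  assumes "distinct (X @ u # ys @ w # Z)" and "set X \<union> set Z = set xs \<union> set zs"
  shows "chord_split chord X ys Z u w"
  using assms chord_u_w no_chord_across by (intro chord_splitI) simp_all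

lemma chord_split_swap:
  assumes "distinct (Y @ w # (zs @ xs) @ u # Y')" and "set Y \<union> set Y' = set ys"
  shows "chord_split chord Y (zs @ xs) Y' w u"
proof -
  have "\<not> chord a b" if "a \<in> set (zs @ xs)" "b \<in> set Y \<union> set Y'" for a b
    using no_chord_across chord_sym[of a b] that assms(2) by auto
  with assms(1) show ?thesis
    using chord_u_w chord_sym[of u w] by (intro chord_splitI) auto
qed

lemma frieze_positive_from_head_outer_rotated:
  assumes cc1: "conway_coxeter (u # ys @ [w])" and fp1: "frieze_positive (u # ys @ [w])"
    and fp2: "frieze_positive (xs @ [u, w] @ zs)"
    and rot: "rotate m (xs @ [u, w] @ zs) = X @ [u, w] @ Z"
    and dist: "distinct (X @ u # ys @ w # Z)"
  shows "frieze_positive_from_head (X @ u # ys @ w # Z)"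
proof (rule chord_split.frieze_positive_from_head_glue[OF chord_split_reorder cc1 fp1])
  show "distinct (X @ u # ys @ w # Z)" by (rule dist)
  show "set X \<union> set Z = set xs \<union> set zs"
    using arg_cong[OF rot, of set] distinct_split dist by auto
  show "frieze_positive (X @ [u, w] @ Z)"
    using frieze_positive_rotate[OF fp2, of m] rot by simp
qed

lemma frieze_positive_from_head_inner_rotated:
  assumes cc2: "conway_coxeter (xs @ [u, w] @ zs)" and fp1: "frieze_positive (u # ys @ [w])"
    and fp2: "frieze_positive (xs @ [u, w] @ zs)" and j: "j \<le> length ys"
    and dist: "distinct (drop j ys @ w # (zs @ xs) @ u # take j ys)"
  shows "frieze_positive_from_head (drop j ys @ w # (zs @ xs) @ u # take j ys)"
proof (rule chord_split.frieze_positive_from_head_glue[OF chord_split_swap])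
  show "distinct (drop j ys @ w # (zs @ xs) @ u # take j ys)" by (rule dist)
  show "set (drop j ys) \<union> set (take j ys) = set ys"
    by (metis append_take_drop_id set_append sup_commute)
  have "rotate (length xs + 1) (xs @ [u, w] @ zs) = w # (zs @ xs) @ [u]"
    using rotate_past_infix[where ys = "[]"] by simp
  then show "conway_coxeter (w # (zs @ xs) @ [u])" and "frieze_positive (w # (zs @ xs) @ [u])"
    using conway_coxeter_rotate[OF cc2] frieze_positive_rotate[OF fp2] by metis+
  have "rotate (j + 1) (u # ys @ [w]) = drop j ys @ [w, u] @ take j ys"
    using j by (simp add: rotate_drop_take)
  then show "frieze_positive (drop j ys @ [w, u] @ take j ys)"
    using frieze_positive_rotate[OF fp1] by metis
qed

text \<open>Every rotation of the glued polygon is again split along u w, with the two pieces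
  exchanged when the rotation starts inside the inner piece.\<close>
lemma frieze_positive_glue:
  assumes cc1: "conway_coxeter (u # ys @ [w])" and cc2: "conway_coxeter (xs @ [u, w] @ zs)"
    and fp1: "frieze_positive (u # ys @ [w])" and fp2: "frieze_positive (xs @ [u, w] @ zs)"
  shows "frieze_positive (xs @ u # ys @ w # zs)"
  unfolding frieze_positive_def
proof
  fix n
  let ?vs = "xs @ u # ys @ w # zs"
  define k where "k = n mod length ?vs"
  have k: "k < length ?vs" unfolding k_def using distinct_split by simp
  have rot: "rotate n ?vs = drop k ?vs @ take k ?vs"
    unfolding k_def by (rule rotate_drop_take)
  have dist: "distinct (rotate n ?vs)" using distinct_split by simp
  consider "k \<le> length xs" | "length xs < k" "k \<le> length xs + 1 + length ys"
    | "length xs + 1 + length ys < k"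
    by linarith
  then show "frieze_positive_from_head (rotate n ?vs)"
  proof cases
    case 1
    then have "rotate k (xs @ [u, w] @ zs) = drop k xs @ [u, w] @ (zs @ take k xs)"
      by (simp add: rotate_drop_take)
    moreover have "rotate n ?vs = drop k xs @ u # ys @ w # (zs @ take k xs)"
      using 1 unfolding rot by simp
    ultimately show ?thesis
      using frieze_positive_from_head_outer_rotated[OF cc1 fp1 fp2] dist by simp
  next
    case 2
    define j where "j = k - length xs - 1"
    with 2 have j: "j \<le> length ys" "k = length xs + 1 + j" by auto
    then have "rotate n ?vs = drop j ys @ w # (zs @ xs) @ u # take j ys"
      unfolding rot by simp
    then show ?thesis
      using frieze_positive_from_head_inner_rotated[OF cc2 fp1 fp2 j(1)] dist by simp
  next
    case 3
    define j where "j = k - length xs - length ys - 2"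
    with 3 k have j: "j < length zs" "k = length xs + length ys + 2 + j" by auto
    then have outer: "rotate (length xs + 2 + j) (xs @ [u, w] @ zs)
        = (drop j zs @ xs) @ [u, w] @ take j zs"
      by (simp add: rotate_drop_take)
    have r: "rotate n ?vs = (drop j zs @ xs) @ u # ys @ w # take j zs"
      using j unfolding rot by simp
    show ?thesis
      unfolding r by (rule frieze_positive_from_head_outer_rotated[OF cc1 fp1 fp2 outer])
        (use dist r in simp)
  qed
qed

end

context chords begin

theorem triangulated_frieze:
  assumes "triangulated vs"
  shows "conway_coxeter vs \<and> frieze_positive vs"
  using assms
proof (induction rule: triangulated.induct)
  case (digon x y)
  then show ?case using conway_coxeter_digon frieze_positive_digon by simp
next
  case (triangle x y z)
  then show ?case using conway_coxeter_triangle frieze_positive_triangle by simp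
next
  case (glue xs u ys w zs)
  then interpret chord_split chord xs ys zs u w
    by unfold_locales
  from glue.IH show ?case
    using conway_coxeter_glue frieze_positive_glue by blast
qed

end

section \<open>Polygons cut out of the strip\<close>

text \<open>One side of a polygon whose vertices are enumerated by f on an integer interval,
  G being the diagonals joining vertices of this side.\<close>
locale chord_interval = chords +
  fixes f :: "int \<Rightarrow> 'a" and G :: "int \<Rightarrow> int \<Rightarrow> bool" and lo hi :: int
  assumes inj_f: "inj f"
    and chord_f: "chord (f a) (f b) \<longleftrightarrow> G a b \<or> G b a"
    and G_gap: "G a b \<Longrightarrow> a \<le> b - 2"
    and G_noncrossing: "G a b \<Longrightarrow> G c d \<Longrightarrow> \<not> (a < c \<and> c < b \<and> b < d)"
    and G_maximal: "lo \<le> a \<Longrightarrow> b \<le> hi \<Longrightarrow> a \<le> b - 2 \<Longrightarrow> \<not> G a b \<Longrightarrow>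
      \<exists>c d. G c d \<and> (a < c \<and> c < b \<and> b < d \<or> c < a \<and> a < d \<and> d < b)"
begin

lemma distinct_map_f: "distinct L \<Longrightarrow> distinct (map f L)"
  using inj_f by (simp add: distinct_map inj_on_def)

lemma no_chord_under_diagonal:
  assumes "G a b" and "a < y" "y < b" and "z < a \<or> b < z"
  shows "\<not> chord (f y) (f z)"
  using assms G_noncrossing[of a b y z] G_noncrossing[of z y a b] G_gap[of y z] G_gap[of z y]
  unfolding chord_f by auto

text \<open>The apex of the triangle on the diagonal p r: the furthest neighbour of p below r.\<close>
lemma apex_exists:
  assumes "lo \<le> p" and "r \<le> hi" and Gpr: "G p r"
  obtains m where "p < m" "m < r" "m = p + 1 \<or> G p m" "m = r - 1 \<or> G m r"
proof -
  define M where "M = {m. p < m \<and> m < r \<and> (m = p + 1 \<or> G p m)}"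
  have "finite M" unfolding M_def by (rule finite_subset[of _ "{p..r}"]) auto
  moreover have "p + 1 \<in> M" unfolding M_def using G_gap[OF Gpr] by auto
  ultimately have mM: "Max M \<in> M" and mmax: "\<And>m'. m' \<in> M \<Longrightarrow> m' \<le> Max M"
    by (auto intro: Max_in)
  let ?m = "Max M"
  from mM have m: "p < ?m" "?m < r" "?m = p + 1 \<or> G p ?m" unfolding M_def by auto
  have "?m = r - 1 \<or> G ?m r"
  proof (rule ccontr)
    assume "\<not> (?m = r - 1 \<or> G ?m r)"
    then obtain c d where cd: "G c d" "?m < c \<and> c < r \<and> r < d \<or> c < ?m \<and> ?m < d \<and> d < r"
      using G_maximal[of ?m r] assms m by auto
    show False
    proof (cases "c < p")
      case True then show False using G_noncrossing[OF cd(1) Gpr] cd(2) m by auto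
    next
      case False
      with cd m have "c = p \<or> p < c \<and> c < ?m \<and> ?m < d \<and> d < r"
        using G_noncrossing[OF Gpr cd(1)] by auto
      then show False
      proof
        assume "c = p"
        then have "d \<in> M" unfolding M_def using cd m by auto
        then show False using mmax cd m by fastforce
      next
        assume "p < c \<and> c < ?m \<and> ?m < d \<and> d < r"
        then show False using G_noncrossing[of p ?m c d] cd(1) m by auto
      qed
    qed
  qed
  with m that show ?thesis by blast
qed

lemma triangulated_ear:
  assumes "p < m" and "m < r" and "m = p + 1 \<or> G p m \<and> triangulated (map f [p..m])"
  shows "triangulated (map f [p..m] @ [f r])"
proof (cases "m = p + 1")
  case True
  then have "map f [p..m] @ [f r] = [f p, f m, f r]" using upto_rec1[of p m] by simp
  moreover have "distinct [f p, f m, f r]" using assms distinct_map_f[of "[p, m, r]"] by simp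
  ultimately show ?thesis by (simp add: triangulated.triangle)
next
  case False
  with assms have Gpm: "G p m" and tri: "triangulated (map f [p..m])" by auto
  have split: "map f [p..m] = f p # map f [p+1..m-1] @ [f m]"
    using assms False by (simp add: upto_rec1[of p m] upto_rec2[of "p+1" m])
  have "distinct ([] @ f p # map f [p+1..m-1] @ f m # [f r])"
    using assms distinct_map_f[of "p # [p+1..m-1] @ [m, r]"] by simp
  moreover have "\<forall>a\<in>set (map f [p+1..m-1]). \<forall>b\<in>set [] \<union> set [f r]. \<not> chord a b"
    using no_chord_under_diagonal[OF Gpm] assms by auto
  moreover have "triangulated ([] @ [f p, f m] @ [f r])"
    using assms distinct_map_f[of "[p, m, r]"] by (auto intro!: triangulated.triangle)
  ultimately have "triangulated ([] @ f p # map f [p+1..m-1] @ f m # [f r])"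
    using triangulated.glue chord_f Gpm tri split by metis
  with split show ?thesis by simp
qed

lemma triangulated_interval:
  "lo \<le> p \<Longrightarrow> r \<le> hi \<Longrightarrow> p < r \<Longrightarrow> r = p + 1 \<or> G p r \<Longrightarrow> triangulated (map f [p..r])"
proof (induct "nat (r - p)" arbitrary: p r rule: less_induct)
  case less
  show ?case
  proof (cases "r = p + 1")
    case True
    then have "map f [p..r] = [f p, f r]" using upto_rec1[of p r] by simp
    moreover have "f p \<noteq> f r" using True inj_f by (simp add: inj_eq)
    ultimately show ?thesis by (simp add: triangulated.digon)
  next
    case False
    with less.prems have Gpr: "G p r" by simp
    obtain m where m: "p < m" "m < r" "m = p + 1 \<or> G p m" "m = r - 1 \<or> G m r"
      using apex_exists[OF less.prems(1,2) Gpr] by blast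
    have ear: "triangulated (map f [p..m] @ [f r])"
      using m less by (intro triangulated_ear) auto
    show ?thesis
    proof (cases "m = r - 1")
      case True
      then show ?thesis using ear m by (simp add: upto_rec2[of p r])
    next
      case False
      with m have Gmr: "G m r" by simp
      have split: "map f [p..r] = map f [p..m-1] @ f m # map f [m+1..r-1] @ f r # []"
        using m by (simp add: upto_split3[of p m r] upto_rec2[of "m+1" r])
      have "distinct (map f [p..m-1] @ f m # map f [m+1..r-1] @ f r # [])"
        unfolding split[symmetric] by (simp add: distinct_map_f)
      moreover have "\<forall>a\<in>set (map f [m+1..r-1]). \<forall>b\<in>set (map f [p..m-1]) \<union> set []. \<not> chord a b"
        using no_chord_under_diagonal[OF Gmr] by auto
      moreover have "triangulated (map f [m..r])"
        by (rule less.hyps) (use less.prems m Gmr in auto)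
      then have "triangulated (f m # map f [m+1..r-1] @ [f r])"
        using m by (simp add: upto_rec1[of m r] upto_rec2[of "m+1" r])
      moreover have "triangulated (map f [p..m-1] @ [f m, f r] @ [])"
        using ear m by (simp add: upto_rec2[of p m])
      ultimately show ?thesis
        using triangulated.glue chord_f Gmr split by metis
    qed
  qed
qed

end

definition arc_between :: "arc set \<Rightarrow> vtx \<Rightarrow> vtx \<Rightarrow> bool" where
  "arc_between T x y \<longleftrightarrow> (\<exists>a\<in>T. ends a = {x, y})"

lemma ends_eq_doubleton_iff:
  "ends x = {Top a, Top b} \<longleftrightarrow> x = Up a b \<or> x = Up b a"
  "ends x = {Bot a, Bot b} \<longleftrightarrow> x = Low a b \<or> x = Low b a"
  "ends x = {Top a, Bot b} \<longleftrightarrow> x = Conn a b"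
  by (cases x; auto simp: doubleton_eq_iff)+

lemma arc_between_iff:
  "arc_between T (Top a) (Top b) \<longleftrightarrow> Up a b \<in> T \<or> Up b a \<in> T"
  "arc_between T (Bot a) (Bot b) \<longleftrightarrow> Low a b \<in> T \<or> Low b a \<in> T"
  "arc_between T (Top a) (Bot b) \<longleftrightarrow> Conn a b \<in> T"
  "arc_between T (Bot b) (Top a) \<longleftrightarrow> Conn a b \<in> T"
  by (auto simp: arc_between_def ends_eq_doubleton_iff insert_commute[of "Bot b"])

locale triangulated_strip =
  fixes T :: "arc set"
  assumes triangulation: "strip_triangulation T"

sublocale triangulated_strip \<subseteq> chords "arc_between T"
  by unfold_locales (auto simp: arc_between_def insert_commute)

context triangulated_strip begin

lemma is_arc_T: "x \<in> T \<Longrightarrow> is_arc x"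
  and T_not_crosses: "x \<in> T \<Longrightarrow> y \<in> T \<Longrightarrow> \<not> crosses x y"
  and T_maximal: "is_arc x \<Longrightarrow> x \<notin> T \<Longrightarrow> \<exists>y\<in>T. crosses x y"
  and conn_above: "\<exists>p q. Conn p q \<in> T \<and> p < i \<and> q > j"
  and conn_below: "\<exists>p q. Conn p q \<in> T \<and> p > i \<and> q < j"
  using triangulation by (auto simp: strip_triangulation_def)

lemma conn_noncrossing: "Conn a b \<in> T \<Longrightarrow> Conn c d \<in> T \<Longrightarrow> (a - c) * (b - d) \<le> 0"
  using T_not_crosses[of "Conn a b" "Conn c d"] by simp

lemma conn_antimono: "Conn a b \<in> T \<Longrightarrow> Conn c d \<in> T \<Longrightarrow> a < c \<Longrightarrow> d \<le> b"
  and conn_antimono': "Conn a b \<in> T \<Longrightarrow> Conn c d \<in> T \<Longrightarrow> b < d \<Longrightarrow> c \<le> a"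
  using conn_noncrossing[of a b c d] by (auto simp: mult_le_0_iff)

lemma Up_in_T_gap: "Up a b \<in> T \<Longrightarrow> a \<le> b - 2"
  and Low_in_T_gap: "Low a b \<in> T \<Longrightarrow> a \<le> b - 2"
  using is_arc_T by fastforce+

lemma Up_maximal:
  assumes "Up p r \<in> T" and "p \<le> a" "b \<le> r" "a \<le> b - 2" "Up a b \<notin> T"
  shows "\<exists>c d. Up c d \<in> T \<and> (a < c \<and> c < b \<and> b < d \<or> c < a \<and> a < d \<and> d < b)"
proof -
  obtain y where y: "y \<in> T" "crosses (Up a b) y" using T_maximal[of "Up a b"] assms by auto
  show ?thesis
  proof (cases y)
    case (Conn c d)
    then have "crosses (Up p r) y" using y assms by auto
    then show ?thesis using T_not_crosses[OF assms(1) y(1)] by simp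
  qed (use y in auto)
qed

lemma Low_maximal:
  assumes "Low s q \<in> T" and "s \<le> a" "b \<le> q" "a \<le> b - 2" "Low a b \<notin> T"
  shows "\<exists>c d. Low c d \<in> T \<and> (a < c \<and> c < b \<and> b < d \<or> c < a \<and> a < d \<and> d < b)"
proof -
  obtain y where y: "y \<in> T" "crosses (Low a b) y" using T_maximal[of "Low a b"] assms by auto
  show ?thesis
  proof (cases y)
    case (Conn c d)
    then have "crosses (Low s q) y" using y assms by auto
    then show ?thesis using T_not_crosses[OF assms(1) y(1)] by simp
  qed (use y in auto)
qed

lemma triangulated_Up_interval:
  assumes "Up p r \<in> T"
  shows "triangulated (map Top [p..r])"
proof -
  interpret chord_interval "arc_between T" Top "\<lambda>a b. Up a b \<in> T" p r
  proof unfold_locales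
    show "inj Top" by (simp add: inj_def)
    show "arc_between T (Top a) (Top b) \<longleftrightarrow> Up a b \<in> T \<or> Up b a \<in> T" for a b
      by (rule arc_between_iff(1))
    show "Up a b \<in> T \<Longrightarrow> a \<le> b - 2" for a b
      by (rule Up_in_T_gap)
    show "Up a b \<in> T \<Longrightarrow> Up c d \<in> T \<Longrightarrow> \<not> (a < c \<and> c < b \<and> b < d)" for a b c d
      using T_not_crosses[of "Up a b" "Up c d"] by auto
    show "p \<le> a \<Longrightarrow> b \<le> r \<Longrightarrow> a \<le> b - 2 \<Longrightarrow> Up a b \<notin> T \<Longrightarrow>
        \<exists>c d. Up c d \<in> T \<and> (a < c \<and> c < b \<and> b < d \<or> c < a \<and> a < d \<and> d < b)" for a b
      by (rule Up_maximal[OF assms])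
  qed
  show ?thesis
    using triangulated_interval[of p r] Up_in_T_gap[OF assms] assms by simp
qed

lemma triangulated_Low_interval:
  assumes "Low s q \<in> T"
  shows "triangulated (map Bot [s..q])"
proof -
  interpret chord_interval "arc_between T" Bot "\<lambda>a b. Low a b \<in> T" s q
  proof unfold_locales
    show "inj Bot" by (simp add: inj_def)
    show "arc_between T (Bot a) (Bot b) \<longleftrightarrow> Low a b \<in> T \<or> Low b a \<in> T" for a b
      by (rule arc_between_iff(2))
    show "Low a b \<in> T \<Longrightarrow> a \<le> b - 2" for a b
      by (rule Low_in_T_gap)
    show "Low a b \<in> T \<Longrightarrow> Low c d \<in> T \<Longrightarrow> \<not> (a < c \<and> c < b \<and> b < d)" for a b c d
      using T_not_crosses[of "Low a b" "Low c d"] by auto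
    show "s \<le> a \<Longrightarrow> b \<le> q \<Longrightarrow> a \<le> b - 2 \<Longrightarrow> Low a b \<notin> T \<Longrightarrow>
        \<exists>c d. Low c d \<in> T \<and> (a < c \<and> c < b \<and> b < d \<or> c < a \<and> a < d \<and> d < b)" for a b
      by (rule Low_maximal[OF assms])
  qed
  show ?thesis
    using triangulated_interval[of s q] Low_in_T_gap[OF assms] assms by simp
qed

definition conn_inside :: "int \<Rightarrow> int \<Rightarrow> int \<Rightarrow> int \<Rightarrow> int \<Rightarrow> int \<Rightarrow> bool" where
  "conn_inside p q r s a b \<longleftrightarrow> Conn a b \<in> T \<and> p \<le> a \<and> a \<le> r \<and> s \<le> b \<and> b \<le> q
     \<and> (a, b) \<noteq> (p, q) \<and> (a, b) \<noteq> (r, s)"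

text \<open>If p < r and s < q, the arc (p, s) cannot be in T, so an arc of T crosses it, and that
  arc lies inside the polygon.\<close>
lemma no_conn_inside_eq:
  assumes c1: "Conn p q \<in> T" and c2: "Conn r s \<in> T" and "p \<le> r" "s \<le> q"
    and ni: "\<not> (\<exists>a b. conn_inside p q r s a b)"
  shows "p = r \<or> q = s"
proof (rule ccontr)
  assume "\<not> (p = r \<or> q = s)"
  then have pr: "p < r" "s < q" using assms by auto
  have "Conn p s \<notin> T"
  proof
    assume "Conn p s \<in> T"
    then have "conn_inside p q r s p s" unfolding conn_inside_def using pr by auto
    with ni show False by blast
  qed
  then obtain y where y: "y \<in> T" "crosses (Conn p s) y" using T_maximal[of "Conn p s"] by auto
  show False
  proof (cases y)
    case (Conn a b)
    have m1: "(a - p) * (b - q) \<le> 0" using conn_noncrossing[OF _ c1, of a b] y Conn by simp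
    have m2: "(a - r) * (b - s) \<le> 0" using conn_noncrossing[OF _ c2, of a b] y Conn by simp
    have cr: "(p - a) * (s - b) > 0" using y Conn by simp
    from cr have "(a > p \<and> b > s) \<or> (a < p \<and> b < s)" by (auto simp: zero_less_mult_iff)
    then show False
    proof
      assume h: "a > p \<and> b > s"
      then have "a \<le> r" using m2 by (auto simp: mult_le_0_iff)
      moreover have "b \<le> q" using m1 h by (auto simp: mult_le_0_iff)
      ultimately have "conn_inside p q r s a b" unfolding conn_inside_def using h y Conn by auto
      then show False using ni by blast
    next
      assume h: "a < p \<and> b < s"
      then have "b \<ge> q" using m1 by (auto simp: mult_le_0_iff)
      then show False using h pr by simp
    qed
  next
    case (Up c d)
    then have "crosses (Conn p q) y" using y by simp
    then show False using T_not_crosses[OF c1 y(1)] by simp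
  next
    case (Low c d)
    then have "crosses (Conn r s) y" using y by simp
    then show False using T_not_crosses[OF c2 y(1)] by simp
  qed
qed

lemma no_conn_inside_Low:
  assumes c1: "Conn p q \<in> T" and c2: "Conn p s \<in> T" and "s + 2 \<le> q"
    and ni: "\<not> (\<exists>a b. conn_inside p q p s a b)"
  shows "Low s q \<in> T"
proof (rule ccontr)
  assume "Low s q \<notin> T"
  then obtain y where y: "y \<in> T" "crosses (Low s q) y" using T_maximal[of "Low s q"] assms by auto
  show False
  proof (cases y)
    case (Conn a b)
    then have h: "s < b" "b < q" using y by auto
    have "p \<le> a" using conn_antimono'[of a b p q] y Conn c1 h by auto
    moreover have "a \<le> p" using conn_antimono'[of p s a b] y Conn c2 h by auto
    ultimately have "conn_inside p q p s a b" unfolding conn_inside_def using h y Conn by auto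
    then show False using ni by blast
  next
    case (Low c d)
    then have "(s<c \<and> c<q \<and> q<d) \<or> (c<s \<and> s<d \<and> d<q)" using y by auto
    then show False
    proof
      assume "s<c \<and> c<q \<and> q<d"
      then have "crosses (Conn p q) y" using Low by simp
      then show False using T_not_crosses[OF c1 y(1)] by simp
    next
      assume "c<s \<and> s<d \<and> d<q"
      then have "crosses (Conn p s) y" using Low by simp
      then show False using T_not_crosses[OF c2 y(1)] by simp
    qed
  next
    case (Up c d) then show False using y by simp
  qed
qed

lemma no_conn_inside_Up:
  assumes c1: "Conn p q \<in> T" and c2: "Conn r q \<in> T" and "p + 2 \<le> r"
    and ni: "\<not> (\<exists>a b. conn_inside p q r q a b)"
  shows "Up p r \<in> T"
proof (rule ccontr)
  assume "Up p r \<notin> T"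
  then obtain y where y: "y \<in> T" "crosses (Up p r) y" using T_maximal[of "Up p r"] assms by auto
  show False
  proof (cases y)
    case (Conn a b)
    then have h: "p < a" "a < r" using y by auto
    have "b \<le> q" using conn_antimono[of p q a b] y Conn c1 h by auto
    moreover have "q \<le> b" using conn_antimono[of a b r q] y Conn c2 h by auto
    ultimately have "conn_inside p q r q a b" unfolding conn_inside_def using h y Conn by auto
    then show False using ni by blast
  next
    case (Up c d)
    then have "(p<c \<and> c<r \<and> r<d) \<or> (c<p \<and> p<d \<and> d<r)" using y by auto
    then show False
    proof
      assume "p<c \<and> c<r \<and> r<d"
      then have "crosses (Conn r q) y" using Up by simp
      then show False using T_not_crosses[OF c2 y(1)] by simp
    next
      assume "c<p \<and> p<d \<and> d<r"
      then have "crosses (Conn p q) y" using Up by simp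
      then show False using T_not_crosses[OF c1 y(1)] by simp
    qed
  next
    case (Low c d) then show False using y by simp
  qed
qed

lemma distinct_poly_verts: "distinct (poly_verts p q r s)"
  by (auto simp: poly_verts_def distinct_map inj_on_def)

lemma poly_verts_split:
  assumes "p \<le> a" "a \<le> r" "s \<le> b" "b \<le> q"
  shows "poly_verts p q r s
      = map Top [p..a-1] @ Top a # (map Top [a+1..r] @ map Bot [s..b-1]) @ Bot b # map Bot [b+1..q]"
    and "Top a # (map Top [a+1..r] @ map Bot [s..b-1]) @ [Bot b] = poly_verts a b r s"
    and "map Top [p..a-1] @ [Top a, Bot b] @ map Bot [b+1..q] = poly_verts p q a b"
  unfolding poly_verts_def using assms
  by (simp_all add: upto_split3[of p a r] upto_split3[of s b q] upto_rec1[of a r] upto_rec2[of s b]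
      upto_rec2[of p a] upto_rec1[of b q])

lemma no_arc_across_conn:
  assumes ab: "Conn a b \<in> T"
    and x: "x \<in> set (map Top [a+1..r] @ map Bot [s..b-1])"
    and y: "y \<in> set (map Top [p..a-1]) \<union> set (map Bot [b+1..q])"
  shows "\<not> arc_between T x y"
proof -
  from x consider (T) x' where "x = Top x'" "a < x'" | (B) x' where "x = Bot x'" "x' < b"
    by auto
  then show ?thesis
  proof cases
    case T
    from y consider (T2) y' where "y = Top y'" "y' < a" | (B2) y' where "y = Bot y'" "b < y'"
      by auto
    then show ?thesis
    proof cases
      case T2
      then show ?thesis using T Up_in_T_gap[of x' y'] T_not_crosses[OF _ ab, of "Up y' x'"]
        by (auto simp: arc_between_iff)
    next
      case B2
      then show ?thesis using T conn_noncrossing[OF _ ab, of x' y']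
        by (auto simp: arc_between_iff mult_le_0_iff)
    qed
  next
    case B
    from y consider (T2) y' where "y = Top y'" "y' < a" | (B2) y' where "y = Bot y'" "b < y'"
      by auto
    then show ?thesis
    proof cases
      case T2
      then show ?thesis using B conn_noncrossing[OF _ ab, of y' x']
        by (auto simp: arc_between_iff mult_le_0_iff)
    next
      case B2
      then show ?thesis using B Low_in_T_gap[of y' x'] T_not_crosses[OF _ ab, of "Low x' y'"]
        by (auto simp: arc_between_iff)
    qed
  qed
qed

lemma triangulated_poly_verts_glue:
  assumes ab: "Conn a b \<in> T" and "p \<le> a" "a \<le> r" "s \<le> b" "b \<le> q"
    and "triangulated (poly_verts a b r s)" and "triangulated (poly_verts p q a b)"
  shows "triangulated (poly_verts p q r s)"
proof -
  note split = poly_verts_split[OF assms(2-5)]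
  have "distinct (map Top [p..a-1] @ Top a # (map Top [a+1..r] @ map Bot [s..b-1]) @ Bot b
      # map Bot [b+1..q])"
    using distinct_poly_verts[of p q r s] split(1) by simp
  moreover have "arc_between T (Top a) (Bot b)" using ab arc_between_iff by simp
  moreover note no_arc_across_conn[OF ab]
  ultimately show ?thesis
    using triangulated.glue assms(6,7) split by (metis (no_types, lifting))
qed

lemma triangulated_poly_verts_Low_side:
  assumes pq: "Conn p q \<in> T" and ps: "Conn p s \<in> T" and "s < q"
    and none: "\<not> (\<exists>a b. conn_inside p q p s a b)"
  shows "triangulated (poly_verts p q p s)"
proof (cases "q = s + 1")
  case True
  then have "poly_verts p q p s = [Top p, Bot s, Bot (s + 1)]"
    using upto_rec1[of s q] by (simp add: poly_verts_def)
  then show ?thesis by (simp add: triangulated.triangle)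
next
  case False
  have Low: "Low s q \<in> T" using no_conn_inside_Low[OF pq ps _ none] assms False by auto
  have split: "poly_verts p q p s = [Top p] @ Bot s # map Bot [s+1..q-1] @ Bot q # []"
    using assms by (simp add: poly_verts_def upto_rec1[of s q] upto_rec2[of "s+1" q])
  have "distinct ([Top p] @ Bot s # map Bot [s+1..q-1] @ Bot q # [])"
    using distinct_poly_verts[of p q p s] split by simp
  moreover have "arc_between T (Bot s) (Bot q)" using Low arc_between_iff by simp
  moreover have "\<forall>x\<in>set (map Bot [s+1..q-1]). \<forall>y\<in>set [Top p] \<union> set []. \<not> arc_between T x y"
  proof (intro ballI)
    fix x y assume "x \<in> set (map Bot [s+1..q-1])" "y \<in> set [Top p] \<union> set []"
    then obtain x' where x': "x = Bot x'" "s < x'" "x' < q" "y = Top p" by auto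
    then have "\<not> conn_inside p q p s p x'" using none by blast
    then show "\<not> arc_between T x y" using x' arc_between_iff by (auto simp: conn_inside_def)
  qed
  moreover have "triangulated (Bot s # map Bot [s+1..q-1] @ [Bot q])"
    using triangulated_Low_interval[OF Low] assms
    by (simp add: upto_rec1[of s q] upto_rec2[of "s+1" q])
  moreover have "triangulated ([Top p] @ [Bot s, Bot q] @ [])"
    using assms by (auto intro!: triangulated.triangle)
  ultimately show ?thesis using triangulated.glue split by metis
qed

lemma triangulated_poly_verts_Up_side:
  assumes pq: "Conn p q \<in> T" and rq: "Conn r q \<in> T" and "p < r"
    and none: "\<not> (\<exists>a b. conn_inside p q r q a b)"
  shows "triangulated (poly_verts p q r q)"
proof (cases "r = p + 1")
  case True
  then have "poly_verts p q r q = [Top p, Top (p + 1), Bot q]"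
    using upto_rec1[of p r] by (simp add: poly_verts_def)
  then show ?thesis by (simp add: triangulated.triangle)
next
  case False
  have Up: "Up p r \<in> T" using no_conn_inside_Up[OF pq rq _ none] assms False by auto
  have split: "poly_verts p q r q = [] @ Top p # map Top [p+1..r-1] @ Top r # [Bot q]"
    using assms by (simp add: poly_verts_def upto_rec1[of p r] upto_rec2[of "p+1" r])
  have "distinct ([] @ Top p # map Top [p+1..r-1] @ Top r # [Bot q])"
    using distinct_poly_verts[of p q r q] split by simp
  moreover have "arc_between T (Top p) (Top r)" using Up arc_between_iff by simp
  moreover have "\<forall>x\<in>set (map Top [p+1..r-1]). \<forall>y\<in>set [] \<union> set [Bot q]. \<not> arc_between T x y"
  proof (intro ballI)
    fix x y assume "x \<in> set (map Top [p+1..r-1])" "y \<in> set [] \<union> set [Bot q]"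
    then obtain x' where x': "x = Top x'" "p < x'" "x' < r" "y = Bot q" by auto
    then have "\<not> conn_inside p q r q x' q" using none by blast
    then show "\<not> arc_between T x y" using x' arc_between_iff by (auto simp: conn_inside_def)
  qed
  moreover have "triangulated (Top p # map Top [p+1..r-1] @ [Top r])"
    using triangulated_Up_interval[OF Up] assms
    by (simp add: upto_rec1[of p r] upto_rec2[of "p+1" r])
  moreover have "triangulated ([] @ [Top p, Top r] @ [Bot q])"
    using assms by (auto intro!: triangulated.triangle)
  ultimately show ?thesis using triangulated.glue split by metis
qed

lemma triangulated_poly_verts:
  "Conn p q \<in> T \<Longrightarrow> Conn r s \<in> T \<Longrightarrow> p \<le> r \<Longrightarrow> s \<le> q \<Longrightarrow> triangulated (poly_verts p q r s)"
proof (induct "nat ((r - p) + (q - s))" arbitrary: p q r s rule: less_induct)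
  case less
  show ?case
  proof (cases "\<exists>a b. conn_inside p q r s a b")
    case True
    then obtain a b where ab: "Conn a b \<in> T" "p \<le> a" "a \<le> r" "s \<le> b" "b \<le> q"
        "(a, b) \<noteq> (p, q)" "(a, b) \<noteq> (r, s)"
      unfolding conn_inside_def by blast
    show ?thesis
    proof (rule triangulated_poly_verts_glue[OF ab(1-5)])
      show "triangulated (poly_verts a b r s)"
      proof (rule less.hyps)
        show "nat (r - a + (b - s)) < nat (r - p + (q - s))" using ab by auto
      qed (use ab less.prems in auto)
      show "triangulated (poly_verts p q a b)"
      proof (rule less.hyps)
        show "nat (a - p + (q - b)) < nat (r - p + (q - s))" using ab by auto
      qed (use ab less.prems in auto)
    qed
  next
    case False
    with less.prems have "p = r \<or> q = s" by (intro no_conn_inside_eq)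
    with less.prems consider "p = r" "q = s" | "p = r" "s < q" | "q = s" "p < r"
      by linarith
    then show ?thesis
    proof cases
      case 1
      then show ?thesis by (simp add: poly_verts_def triangulated.digon)
    next
      case 2
      then show ?thesis using triangulated_poly_verts_Low_side less.prems False by auto
    next
      case 3
      then show ?thesis using triangulated_poly_verts_Up_side less.prems False by auto
    qed
  qed
qed

section \<open>The map Phi\<close>

lemma poly_adj_iff_joined:
  assumes d: "distinct vs" and u: "u < length vs" and v: "v < length vs"
  shows "poly_adj (length vs) (\<lambda>u v. \<exists>x\<in>T. ends x = {vs ! u, vs ! v}) u v
     \<longleftrightarrow> joined vs (vs ! u) (vs ! v)"
proof -
  have "u \<noteq> v \<longleftrightarrow> vs ! u \<noteq> vs ! v" using d u v by (simp add: nth_eq_iff_index_eq)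
  moreover have "v = Suc u mod length vs \<longleftrightarrow> cyc_consecutive vs (vs ! u) (vs ! v)"
    and "u = Suc v mod length vs \<longleftrightarrow> cyc_consecutive vs (vs ! v) (vs ! u)"
    using cyc_consecutive_nth_iff[OF d u v] cyc_consecutive_nth_iff[OF d v u] by simp_all
  moreover have "(\<exists>x\<in>T. ends x = {vs ! u, vs ! v}) \<or> (\<exists>x\<in>T. ends x = {vs ! v, vs ! u})
      \<longleftrightarrow> arc_between T (vs ! u) (vs ! v)"
    by (auto simp: arc_between_def insert_commute)
  moreover have "vs ! u \<in> set vs" "vs ! v \<in> set vs" using u v by auto
  ultimately show ?thesis unfolding poly_adj_def joined_def using u v by blast
qed

lemma triangles_at_eq_image_indices:
  assumes d: "distinct vs" and l: "l < length vs"
  shows "triangles_at vs (vs ! l) = (\<lambda>S. (!) vs ` S) ` {S. S \<subseteq> {..<length vs} \<and> card S = 3 \<and>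
     l \<in> S \<and> (\<forall>u\<in>S. \<forall>v\<in>S. u \<noteq> v \<longrightarrow> joined vs (vs ! u) (vs ! v))}"
    (is "_ = _ ` ?F")
proof (intro set_eqI iffI)
  have injn: "inj_on (nth vs) {..<length vs}" using inj_on_nth[OF d] by simp
  fix S' assume S': "S' \<in> triangles_at vs (vs ! l)"
  define S where "S = {i. i < length vs \<and> vs ! i \<in> S'}"
  have Ssub: "S \<subseteq> {..<length vs}" unfolding S_def by auto
  have "S' \<subseteq> set vs" using S' by (simp add: triangles_at_def)
  then have im: "(!) vs ` S = S'"
    unfolding S_def by (force simp: in_set_conv_nth)
  then have "card S = card S'" using card_image[OF inj_on_subset[OF injn Ssub]] by simp
  moreover have "vs ! u \<noteq> vs ! v" if "u \<in> S" "v \<in> S" "u \<noteq> v" for u v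
    using that d unfolding S_def by (simp add: nth_eq_iff_index_eq)
  ultimately have "S \<in> ?F" using Ssub S' l unfolding S_def triangles_at_def by auto
  then show "S' \<in> (\<lambda>S. (!) vs ` S) ` ?F" using im by blast
next
  have injn: "inj_on (nth vs) {..<length vs}" using inj_on_nth[OF d] by simp
  fix S' assume "S' \<in> (\<lambda>S. (!) vs ` S) ` ?F"
  then obtain S where S: "S \<in> ?F" "S' = (!) vs ` S" by blast
  then have "card S' = card S" using card_image[OF inj_on_subset[OF injn]] by auto
  moreover have "joined vs a b" if a: "a \<in> S'" and b: "b \<in> S'" and ab: "a \<noteq> b" for a b
  proof -
    obtain u v where uv: "u \<in> S" "v \<in> S" "a = vs ! u" "b = vs ! v" using S(2) a b by blast
    have "\<forall>u\<in>S. \<forall>v\<in>S. u \<noteq> v \<longrightarrow> joined vs (vs ! u) (vs ! v)" using S(1) by simp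
    then show ?thesis using uv ab by auto
  qed
  ultimately show "S' \<in> triangles_at vs (vs ! l)"
    using S unfolding triangles_at_def by auto
qed

lemma poly_triangles_at_eq_quiddity:
  assumes d: "distinct vs" and l: "l < length vs"
  shows "int (poly_triangles_at (length vs) (\<lambda>u v. \<exists>x\<in>T. ends x = {vs ! u, vs ! v}) l)
     = quiddity vs (vs ! l)"
proof -
  let ?F = "{S. S \<subseteq> {..<length vs} \<and> card S = 3 \<and> l \<in> S \<and>
     (\<forall>u\<in>S. \<forall>v\<in>S. u \<noteq> v \<longrightarrow> joined vs (vs ! u) (vs ! v))}"
  have injn: "inj_on (nth vs) {..<length vs}" using inj_on_nth[OF d] by simp
  have inj: "inj_on (\<lambda>S. (!) vs ` S) ?F"
    by (rule inj_onI) (use inj_on_image_eq_iff[OF injn] in blast)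
  have "poly_triangles_at (length vs) (\<lambda>u v. \<exists>x\<in>T. ends x = {vs ! u, vs ! v}) l = card ?F"
    unfolding poly_triangles_at_def using poly_adj_iff_joined[OF d]
    by (intro arg_cong[where f = card] Collect_cong) blast
  then show ?thesis
    unfolding quiddity_def triangles_at_eq_image_indices[OF d l] card_image[OF inj] by simp
qed

lemma friese_eq_frieze_entry:
  assumes d: "distinct vs" and split: "vs = A @ x # pre @ y # C"
  shows "friese (length vs) (\<lambda>u v. \<exists>x\<in>T. ends x = {vs ! u, vs ! v}) (length A) (length A + 1 + length pre)
       = frieze_entry vs pre"
proof -
  let ?N = "length vs" and ?D = "\<lambda>u v. \<exists>x\<in>T. ends x = {vs ! u, vs ! v}"
  let ?a = "\<lambda>x. int (poly_triangles_at ?N ?D x)" and ?k = "length A"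
  have N: "?N = length A + 1 + length pre + 1 + length C" using split by simp
  have m: "(length A + 1 + length pre + ?N - length A) mod ?N = Suc (length pre)"
    using N by (simp add: mod_if)
  have "map (\<lambda>t. ?a ((?k + t + 1) mod ?N)) [0..<length pre] = map (quiddity vs) pre"
  proof (rule nth_equalityI)
    fix t assume "t < length (map (\<lambda>t. ?a ((?k + t + 1) mod ?N)) [0..<length pre])"
    then have t: "t < length pre" and lt: "?k + t + 1 < ?N" using N by simp_all
    have "vs ! (?k + t + 1) = pre ! t" using t unfolding split by (simp add: nth_append)
    then show "map (\<lambda>t. ?a ((?k + t + 1) mod ?N)) [0..<length pre] ! t = map (quiddity vs) pre ! t"
      using t lt poly_triangles_at_eq_quiddity[OF d lt] by simp
  qed simp
  then show ?thesis unfolding friese_def m using friese_seq_frieze_prod[of ?a ?N ?k "length pre"] by simp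
qed

lemma poly_verts_split_at:
  assumes "p < i" "i < r" "s < j" "j < q"
  shows "poly_verts p q r s
     = map Top [p..i-1] @ Top i # (map Top [i+1..r] @ map Bot [s..j-1]) @ Bot j # map Bot [j+1..q]"
  unfolding poly_verts_def using assms by (simp add: upto_split3[of p i r] upto_split3[of s j q])

lemma phi_at_eq_frieze_entry:
  assumes v: "valid_choice T i j p q r s"
  shows "phi_at T i j p q r s = frieze_entry (poly_verts p q r s) (map Top [i+1..r] @ map Bot [s..j-1])"
proof -
  from v have h: "p < i" "i < r" "s < j" "j < q" unfolding valid_choice_def by auto
  have "nat (i - p) = length (map Top [p..i-1])"
    and "nat (r - p + 1) + nat (j - s) = length (map Top [p..i-1]) + 1 + length (map Top [i+1..r] @ map Bot [s..j-1])"
    using h by simp_all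
  then show ?thesis unfolding phi_at_def Let_def
    by (simp only:) (rule friese_eq_frieze_entry[OF distinct_poly_verts poly_verts_split_at[OF h]])
qed

lemma phi_at_extend_left:
  assumes v: "valid_choice T i j p q r s" and PQ: "Conn P Q \<in> T" "P \<le> p" "q \<le> Q"
  shows "phi_at T i j p q r s = phi_at T i j P Q r s"
proof -
  from v have h: "p < i" "i < r" "s < j" "j < q" "Conn p q \<in> T" "Conn r s \<in> T"
    unfolding valid_choice_def by auto
  have v2: "valid_choice T i j P Q r s" using v PQ unfolding valid_choice_def by auto
  let ?xs = "map Top [P..p-1]" and ?ys = "map Top [p+1..r] @ map Bot [s..q-1]"
    and ?zs = "map Bot [q+1..Q]"
  note split = poly_verts_split[of P p r s q Q]
  have whole: "poly_verts P Q r s = ?xs @ Top p # ?ys @ Bot q # ?zs" using split(1) h PQ by simp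
  have inner: "Top p # ?ys @ [Bot q] = poly_verts p q r s" using split(2) h PQ by simp
  interpret chord_split "arc_between T" ?xs ?ys ?zs "Top p" "Bot q"
  proof (rule chord_splitI)
    show "distinct (?xs @ Top p # ?ys @ Bot q # ?zs)" using distinct_poly_verts whole by metis
    show "arc_between T (Top p) (Bot q)" using h arc_between_iff by simp
  qed (use no_arc_across_conn[OF h(5)] in blast)
  have "set (map Top [i+1..r] @ map Bot [s..j-1]) \<subseteq> set ?ys" using h by auto
  then show ?thesis
    unfolding phi_at_eq_frieze_entry[OF v] phi_at_eq_frieze_entry[OF v2] whole inner[symmetric]
    by (simp only: map_quiddity_glue(1))
qed

lemma phi_at_extend_right:
  assumes v: "valid_choice T i j p q r s" and RS: "Conn R S \<in> T" "r \<le> R" "S \<le> s"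
  shows "phi_at T i j p q r s = phi_at T i j p q R S"
proof -
  from v have h: "p < i" "i < r" "s < j" "j < q" "Conn p q \<in> T" "Conn r s \<in> T"
    unfolding valid_choice_def by auto
  have v2: "valid_choice T i j p q R S" using v RS unfolding valid_choice_def by auto
  let ?xs = "map Top [p..r-1]" and ?ys = "map Top [r+1..R] @ map Bot [S..s-1]"
    and ?zs = "map Bot [s+1..q]"
  note split = poly_verts_split[of p r R S s q]
  have whole: "poly_verts p q R S = ?xs @ Top r # ?ys @ Bot s # ?zs" using split(1) h RS by simp
  have inner: "Top r # ?ys @ [Bot s] = poly_verts r s R S" using split(2) h RS by simp
  have outer: "?xs @ [Top r, Bot s] @ ?zs = poly_verts p q r s" using split(3) h RS by simp
  interpret chord_split "arc_between T" ?xs ?ys ?zs "Top r" "Bot s"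
  proof (rule chord_splitI)
    show "distinct (?xs @ Top r # ?ys @ Bot s # ?zs)" using distinct_poly_verts whole by metis
    show "arc_between T (Top r) (Bot s)" using h arc_between_iff by simp
  qed (use no_arc_across_conn[OF h(6)] in blast)
  have "conway_coxeter (Top r # ?ys @ [Bot s])"
    unfolding inner using triangulated_frieze[OF triangulated_poly_verts[OF h(6) RS(1)]] RS by auto
  then have "frieze_prod (map (quiddity (poly_verts p q R S))
        (map Top [i+1..r-1] @ Top r # ?ys @ Bot s # map Bot [s+1..j-1]))
      = frieze_prod (map (quiddity (poly_verts p q r s))
        (map Top [i+1..r-1] @ Top r # Bot s # map Bot [s+1..j-1]))"
    unfolding whole outer[symmetric] by (rule frieze_prod_glue_collapse) (use h in auto)
  moreover have "map Top [i+1..R] @ map Bot [S..j-1]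
      = map Top [i+1..r-1] @ Top r # ?ys @ Bot s # map Bot [s+1..j-1]"
    using h RS by (simp add: upto_split3[of "i+1" r R] upto_split3[of S s "j-1"])
  moreover have "map Top [i+1..r] @ map Bot [s..j-1]
      = map Top [i+1..r-1] @ Top r # Bot s # map Bot [s+1..j-1]"
    using h by (simp add: upto_rec2[of "i+1" r] upto_rec1[of s "j-1"])
  ultimately show ?thesis
    unfolding phi_at_eq_frieze_entry[OF v] phi_at_eq_frieze_entry[OF v2] by simp
qed

lemma conn_outer_bound_left:
  assumes "Conn p q \<in> T" "Conn p' q' \<in> T"
  shows "\<exists>P Q. Conn P Q \<in> T \<and> P \<le> p \<and> P \<le> p' \<and> q \<le> Q \<and> q' \<le> Q"
proof -
  have "p \<le> p' \<and> q' \<le> q \<or> p' \<le> p \<and> q \<le> q'"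
    using conn_noncrossing[OF assms] by (auto simp: mult_le_0_iff)
  then show ?thesis using assms by blast
qed

lemma conn_outer_bound_right:
  assumes "Conn r s \<in> T" "Conn r' s' \<in> T"
  shows "\<exists>R S. Conn R S \<in> T \<and> r \<le> R \<and> r' \<le> R \<and> S \<le> s \<and> S \<le> s'"
proof -
  have "r \<le> r' \<and> s' \<le> s \<or> r' \<le> r \<and> s \<le> s'"
    using conn_noncrossing[OF assms] by (auto simp: mult_le_0_iff)
  then show ?thesis using assms by blast
qed

lemma phi_at_choice_independent:
  assumes v: "valid_choice T i j p q r s" and v': "valid_choice T i j p' q' r' s'"
  shows "phi_at T i j p q r s = phi_at T i j p' q' r' s'"
proof -
  obtain P Q where PQ: "Conn P Q \<in> T" "P \<le> p" "P \<le> p'" "q \<le> Q" "q' \<le> Q"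
    using conn_outer_bound_left[of p q p' q'] v v' unfolding valid_choice_def by blast
  obtain R S where RS: "Conn R S \<in> T" "r \<le> R" "r' \<le> R" "S \<le> s" "S \<le> s'"
    using conn_outer_bound_right[of r s r' s'] v v' unfolding valid_choice_def by blast
  have "phi_at T i j p q r s = phi_at T i j P Q R S"
    using phi_at_extend_left[OF v PQ(1,2,4)] phi_at_extend_right[of i j P Q r s R S] v PQ RS
    by (simp add: valid_choice_def)
  also have "\<dots> = phi_at T i j p' q' r' s'"
    using phi_at_extend_left[OF v' PQ(1,3,5)] phi_at_extend_right[of i j P Q r' s' R S] v' PQ RS
    by (simp add: valid_choice_def)
  finally show ?thesis .
qed

lemma valid_choice_exists: "\<exists>p q r s. valid_choice T i j p q r s"
  using conn_above[of i j] conn_below[of i j] unfolding valid_choice_def by blast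

lemma Phi_eq_phi_at:
  assumes v: "valid_choice T i j p q r s"
  shows "Phi T i j = phi_at T i j p q r s"
proof -
  let ?P = "\<lambda>(p, q, r, s). valid_choice T i j p q r s"
  obtain p' q' r' s' where e: "(SOME x. ?P x) = (p', q', r', s')" by (metis prod_cases4)
  have "?P (SOME x. ?P x)" using v by (intro someI_ex[of ?P]) auto
  then have "valid_choice T i j p' q' r' s'" using e by simp
  then show ?thesis unfolding Phi_def e using phi_at_choice_independent[OF _ v] by simp
qed

lemma phi_at_ge_one_iff:
  assumes v: "valid_choice T i j p q r s"
  shows "1 \<le> phi_at T i j p q r s \<and> (phi_at T i j p q r s = 1 \<longleftrightarrow> Conn i j \<in> T)"
proof -
  from v have h: "p < i" "i < r" "s < j" "j < q" "Conn p q \<in> T" "Conn r s \<in> T"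
    unfolding valid_choice_def by auto
  let ?vs = "poly_verts p q r s" and ?A = "map Top [p..i-1]"
    and ?pre = "map Top [i+1..r] @ map Bot [s..j-1]" and ?C = "map Bot [j+1..q]"
  have split: "?vs = ?A @ Top i # ?pre @ Bot j # ?C" by (rule poly_verts_split_at[OF h(1-4)])
  have "rotate (length ?A) ?vs = Top i # ?pre @ Bot j # (?C @ ?A)"
    unfolding split using rotate_append[of ?A "Top i # ?pre @ Bot j # ?C"] by simp
  moreover have "frieze_positive ?vs"
    using triangulated_frieze[OF triangulated_poly_verts[OF h(5,6)]] h by simp
  ultimately have frieze:
    "1 \<le> frieze_entry ?vs ?pre \<and> (frieze_entry ?vs ?pre = 1 \<longleftrightarrow> joined ?vs (Top i) (Bot j))"
    using frieze_positiveD by blast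
  have d: "distinct ?vs" by (rule distinct_poly_verts)
  have N: "length ?vs = length ?A + 1 + length ?pre + 1 + length ?C" unfolding split by simp
  have u: "?vs ! length ?A = Top i" and w: "?vs ! (length ?A + 1 + length ?pre) = Bot j"
    unfolding split by (simp_all add: nth_append)
  have ul: "length ?A < length ?vs" and wl: "length ?A + 1 + length ?pre < length ?vs"
    using N h by auto
  have "Suc (length ?A) mod length ?vs = Suc (length ?A)" "0 < length ?pre"
    using N h by auto
  then have "\<not> cyc_consecutive ?vs (Top i) (Bot j)"
    using cyc_consecutive_nth_iff[OF d ul wl] u w h by simp
  moreover have "Suc (length ?A + 1 + length ?pre) mod length ?vs = Suc (length ?A + 1 + length ?pre)"
    using N h by simp
  then have "\<not> cyc_consecutive ?vs (Bot j) (Top i)"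
    using cyc_consecutive_nth_iff[OF d wl ul] u w by simp
  ultimately have "joined ?vs (Top i) (Bot j) \<longleftrightarrow> Conn i j \<in> T"
    unfolding joined_def using arc_between_iff split by auto
  then show ?thesis unfolding phi_at_eq_frieze_entry[OF v] using frieze by simp
qed

lemma Phi_ge_one_iff: "1 \<le> Phi T i j \<and> (Phi T i j = 1 \<longleftrightarrow> Conn i j \<in> T)"
  using valid_choice_exists[of i j] Phi_eq_phi_at phi_at_ge_one_iff by metis

lemma Phi_diamond: "Phi T i j * Phi T (i+1) (j+1) - Phi T i (j+1) * Phi T (i+1) j = 1"
proof -
  obtain p q where pq: "Conn p q \<in> T" "p < i" "q > j + 1" using conn_above by blast
  obtain r s where rs: "Conn r s \<in> T" "r > i + 1" "s < j" using conn_below by blast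
  have v: "valid_choice T i j p q r s" "valid_choice T (i+1) (j+1) p q r s"
    "valid_choice T i (j+1) p q r s" "valid_choice T (i+1) j p q r s"
    using pq rs unfolding valid_choice_def by auto
  let ?a = "quiddity (poly_verts p q r s)"
  let ?B = "map Top [i+1+1..r] @ map Bot [s..j-1]"
  have "map Top [i+1..r] @ map Bot [s..j-1] = Top (i+1) # ?B"
    and "map Top [i+1+1..r] @ map Bot [s..j+1-1] = ?B @ [Bot j]"
    and "map Top [i+1..r] @ map Bot [s..j+1-1] = Top (i+1) # ?B @ [Bot j]"
    using rs by (simp_all add: upto_rec1[of "i+1" r] upto_rec2[of s j])
  then have "Phi T i j = mat2_11 (frieze_prod (map ?a ?B) * frieze_step (?a (Top (i+1))))"
    and "Phi T (i+1) (j+1) = mat2_11 (frieze_step (?a (Bot j)) * frieze_prod (map ?a ?B))"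
    and "Phi T i (j+1)
      = mat2_11 (frieze_step (?a (Bot j)) * frieze_prod (map ?a ?B) * frieze_step (?a (Top (i+1))))"
    and "Phi T (i+1) j = mat2_11 (frieze_prod (map ?a ?B))"
    unfolding Phi_eq_phi_at[OF v(1)] Phi_eq_phi_at[OF v(2)] Phi_eq_phi_at[OF v(3)]
      Phi_eq_phi_at[OF v(4)] phi_at_eq_frieze_entry[OF v(1)] phi_at_eq_frieze_entry[OF v(2)]
      phi_at_eq_frieze_entry[OF v(3)] phi_at_eq_frieze_entry[OF v(4)]
    by (simp_all add: frieze_prod_append mult.assoc)
  then show ?thesis using frieze_diamond[OF det2_frieze_prod] by simp
qed

end

theorem proposition4p3:
  assumes "strip_triangulation T"
  shows "(\<forall>i j. \<exists>p q r s. valid_choice T i j p q r s)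
       \<and> (\<forall>i j p q r s p' q' r' s'. valid_choice T i j p q r s \<and> valid_choice T i j p' q' r' s'
              \<longrightarrow> phi_at T i j p q r s = phi_at T i j p' q' r' s')
       \<and> sl2_tiling (Phi T)
       \<and> enough_ones (Phi T)
       \<and> (\<forall>i j. Phi T i j = 1 \<longleftrightarrow> Conn i j \<in> T)"
proof -
  interpret triangulated_strip T by unfold_locales (rule assms)
  have ones: "Phi T i j = 1 \<longleftrightarrow> Conn i j \<in> T" for i j
    using Phi_ge_one_iff by blast
  have "sl2_tiling (Phi T)"
    unfolding sl2_tiling_def using Phi_ge_one_iff Phi_diamond by blast
  moreover have "enough_ones (Phi T)"
    unfolding enough_ones_def using conn_above conn_below ones by blast
  ultimately show ?thesis
    using valid_choice_exists phi_at_choice_independent ones by blast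
qed

end
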